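(* Let $\epsilon\in(0,1/30]$ and let $y$ be the output of the covering procedure described in the context. Then $y\ge 0$ and $A^Ty\ge\mathbf 1$ always hold, and there is an absolute constant $C>0$ such that with probability at least $9/10$, $\mathbf 1^Ty\le (1+C\epsilon)\,\mathrm{OPT}$. The procedure runs Algorithm 1 for $T=O\!\left(\frac{\log^2(1/\epsilon)\log(nm/\epsilon)\log(2n)}{\epsilon^2}\right)$ iterations.
   Context: Standing setup: $A\in\mathbb{R}^{m\times n}_{\ge 0}$ has no zero column and is normalized so that $\min_{i\in[n]}\|A_{:i}\|_\infty=1$, where $A_{:i}$ denotes the $i$-th column. The packing LP is $\max\{\mathbf 1^Tx: x\ge 0,\ Ax\le \mathbf 1\}$ with optimal value $\mathrm{OPT}$, which equals the optimal value of the covering LP $\min\{\mathbf 1^Ty: y\ge 0,\ A^Ty\ge \mathbf 1\}$. $\log$ is the natural logarithm unless written $\log_2$. $\mu=\frac{\epsilon}{4\log(nm/\epsilon)}$, $p_j(x)=\exp\big(\frac{1}{\mu}((Ax)_j-1)\big)$, $p(x)=(p_1(x),\dots,p_m(x))$, $f_\mu(x)=-\mathbf 1^Tx+\mu\sum_j p_j(x)$, with $\nabla_i f_\mu(x)=-1+\sum_j A_{ji}p_j(x)$. Algorithm 1 with $T$ iterations: set $\alpha=\mu/20$, $w=\lceil\log_2(1/\epsilon)\rceil$, $x_0[i]=\frac{1-\epsilon/2}{n\|A_{:i}\|_\infty}$. For $k=0,\dots,T-1$: choose $t_k\in\{0,\dots,w-1\}$ uniformly at random, independently of the past; writing $g_i=\nabla_i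 f_\mu(x_k)$, define $\xi_k[i]=0$ if $|g_i|\le\epsilon$, $\xi_k[i]=g_i$ if $\epsilon<|g_i|\le 1$, $\xi_k[i]=1$ if $g_i>1$; $\xi^{(t)}_k[i]=\xi_k[i]$ if $\epsilon2^t<|\xi_k[i]|\le\epsilon2^{t+1}$ and $0$ otherwise; $x_{k+1}[i]=x_k[i]\exp(-\alpha\,\xi^{(t_k)}_k[i])$. Covering procedure: run Algorithm 1 for $T=\big\lceil\max\{\frac{6w\log(2n)}{\alpha\epsilon},\frac{2w^2\log(n/\epsilon)}{\epsilon^2}\}\big\rceil$ iterations; let $\bar y=\frac1T\sum_{k=0}^{T-1}p(x_k)$. Algorithm 2: set $\bar y'=\bar y$; for every $i\in[n]$ with $\lambda_i:=(A^T\bar y)_i-1+\epsilon\le -2\epsilon$, pick $j$ with $A_{j,i}=\|A_{:i}\|_\infty$ and increase $\bar y'_j$ by $-\lambda_i/A_{j,i}$. Output $y=\bar y'/(1-3\epsilon)$. *)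

theory Defs
  imports "HOL-Probability.Probability"
begin

text \<open>Matrices are A :: nat => nat => real, entry A j i = A_{j,i}, with row indices j < m
and column indices i < n. Vectors are functions nat => real, only indices below the
dimension matter.\<close>

definition colnorm :: "(nat \<Rightarrow> nat \<Rightarrow> real) \<Rightarrow> nat \<Rightarrow> nat \<Rightarrow> real" where
  "colnorm A m i = Max ((\<lambda>j. \<bar>A j i\<bar>) ` {..<m})"

definition OPT :: "(nat \<Rightarrow> nat \<Rightarrow> real) \<Rightarrow> nat \<Rightarrow> nat \<Rightarrow> real" where
  "OPT A m n = Sup {(\<Sum>i<n. x i) | x. (\<forall>i<n. 0 \<le> x i) \<and>
                      (\<forall>j<m. (\<Sum>i<n. A j i * x i) \<le> 1)}"

definition mu :: "nat \<Rightarrow> nat \<Rightarrow> real \<Rightarrow> real" where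
  "mu m n eps = eps / (4 * ln (real n * real m / eps))"

definition Amul :: "(nat \<Rightarrow> nat \<Rightarrow> real) \<Rightarrow> nat \<Rightarrow> (nat \<Rightarrow> real) \<Rightarrow> nat \<Rightarrow> real" where
  "Amul A n x j = (\<Sum>i<n. A j i * x i)"

definition pvec :: "(nat \<Rightarrow> nat \<Rightarrow> real) \<Rightarrow> nat \<Rightarrow> nat \<Rightarrow> real \<Rightarrow> (nat \<Rightarrow> real) \<Rightarrow> nat \<Rightarrow> real" where
  "pvec A m n eps x j = exp ((Amul A n x j - 1) / mu m n eps)"

definition grad :: "(nat \<Rightarrow> nat \<Rightarrow> real) \<Rightarrow> nat \<Rightarrow> nat \<Rightarrow> real \<Rightarrow> (nat \<Rightarrow> real) \<Rightarrow> nat \<Rightarrow> real" where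
  "grad A m n eps x i = -1 + (\<Sum>j<m. A j i * pvec A m n eps x j)"

text \<open>Clipped gradient xi_k[i] (note the gradient is always >= -1).\<close>
definition clip :: "real \<Rightarrow> real \<Rightarrow> real" where
  "clip eps g = (if \<bar>g\<bar> \<le> eps then 0 else if \<bar>g\<bar> \<le> 1 then g else if g > 1 then 1 else g)"

definition bucket :: "real \<Rightarrow> nat \<Rightarrow> real \<Rightarrow> real" where
  "bucket eps t v = (if eps * 2 ^ t < \<bar>v\<bar> \<and> \<bar>v\<bar> \<le> eps * 2 ^ (t + 1) then v else 0)"

definition wpar :: "real \<Rightarrow> nat" where
  "wpar eps = nat \<lceil>log 2 (1 / eps)\<rceil>"

definition alpha :: "nat \<Rightarrow> nat \<Rightarrow> real \<Rightarrow> real" where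
  "alpha m n eps = mu m n eps / 20"

definition x0 :: "(nat \<Rightarrow> nat \<Rightarrow> real) \<Rightarrow> nat \<Rightarrow> nat \<Rightarrow> real \<Rightarrow> nat \<Rightarrow> real" where
  "x0 A m n eps i = (1 - eps / 2) / (real n * colnorm A m i)"

definition alg1_step :: "(nat \<Rightarrow> nat \<Rightarrow> real) \<Rightarrow> nat \<Rightarrow> nat \<Rightarrow> real \<Rightarrow> nat \<Rightarrow> (nat \<Rightarrow> real) \<Rightarrow> nat \<Rightarrow> real" where
  "alg1_step A m n eps t x = (\<lambda>i. x i * exp (- alpha m n eps * bucket eps t (clip eps (grad A m n eps x i))))"

fun alg1_iter :: "(nat \<Rightarrow> nat \<Rightarrow> real) \<Rightarrow> nat \<Rightarrow> nat \<Rightarrow> real \<Rightarrow> nat list \<Rightarrow> nat \<Rightarrow> nat \<Rightarrow> real" where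
  "alg1_iter A m n eps ts 0 = x0 A m n eps"
| "alg1_iter A m n eps ts (Suc k) = alg1_step A m n eps (ts ! k) (alg1_iter A m n eps ts k)"

definition Tpar :: "nat \<Rightarrow> nat \<Rightarrow> real \<Rightarrow> nat" where
  "Tpar m n eps = nat \<lceil>max (6 * real (wpar eps) * ln (2 * real n) / (alpha m n eps * eps))
                             (2 * real (wpar eps) ^ 2 * ln (real n / eps) / eps ^ 2)\<rceil>"

definition ybar :: "(nat \<Rightarrow> nat \<Rightarrow> real) \<Rightarrow> nat \<Rightarrow> nat \<Rightarrow> real \<Rightarrow> nat list \<Rightarrow> nat \<Rightarrow> real" where
  "ybar A m n eps ts = (\<lambda>j. (1 / real (Tpar m n eps)) *
       (\<Sum>k<Tpar m n eps. pvec A m n eps (alg1_iter A m n eps ts k) j))"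

definition lam :: "(nat \<Rightarrow> nat \<Rightarrow> real) \<Rightarrow> nat \<Rightarrow> real \<Rightarrow> (nat \<Rightarrow> real) \<Rightarrow> nat \<Rightarrow> real" where
  "lam A m eps y i = (\<Sum>j<m. A j i * y j) - 1 + eps"

text \<open>Algorithm 2; pick i is the row j chosen for column i (with A j i = colnorm).\<close>
definition alg2 :: "(nat \<Rightarrow> nat \<Rightarrow> real) \<Rightarrow> nat \<Rightarrow> nat \<Rightarrow> real \<Rightarrow> (nat \<Rightarrow> nat) \<Rightarrow> (nat \<Rightarrow> real) \<Rightarrow> nat \<Rightarrow> real" where
  "alg2 A m n eps pick y = (\<lambda>j. y j +
       (\<Sum>i\<in>{i. i < n \<and> lam A m eps y i \<le> -2 * eps \<and> pick i = j}. - lam A m eps y i / A j i))"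

definition cover_output :: "(nat \<Rightarrow> nat \<Rightarrow> real) \<Rightarrow> nat \<Rightarrow> nat \<Rightarrow> real \<Rightarrow> (nat \<Rightarrow> nat) \<Rightarrow> nat list \<Rightarrow> nat \<Rightarrow> real" where
  "cover_output A m n eps pick ts = (\<lambda>j. alg2 A m n eps pick (ybar A m n eps ts) j / (1 - 3 * eps))"

text \<open>All possible random choice sequences (t_0,...,t_{T-1}); the uniform distribution on
this set is exactly T independent uniform choices from {0..w-1}.\<close>
definition choice_seqs :: "nat \<Rightarrow> nat \<Rightarrow> real \<Rightarrow> nat list set" where
  "choice_seqs m n eps = {ts. length ts = Tpar m n eps \<and> set ts \<subseteq> {..<wpar eps}}"

end

theory Submission
  imports Defs
begin

text \<open>Algorithm 1 is a multiplicative-weights descent on the smoothed potential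
f(x) = - 1^T x + \<mu> \<Sum>_j p_j(x). With \<alpha> = \<mu>/20 a second-order expansion shows that every bucket
step decreases f by \<alpha>/10 times its realised gain \<Sum>_i x_i \<eta>_i \<nabla>_i f, and the invariant
x > 0, Ax \<le> 1 + 2 eps, f(x) \<le> eps is preserved; hence 1^T x \<le> K = (1 + 2 eps) OPT and f \<ge> - K
along the run, so the realised gains sum to O(K/\<alpha>).

Averaged over the uniformly random bucket, a step realises exactly a 1/w fraction of the full
clipped gain \<Sum>_i x_i \<xi>_i \<nabla>_i f and of the full clipped shift \<Sum>_i x_i \<xi>_i. Three
supermartingales over the choice sequence (a linear one for the gain, exponential ones for the
shift and for each coordinate x_i) show that, outside an event of probability
1/20 + 1/1000 + 1/512 < 1/10, the full gains sum to O(w K / \<alpha>), the full shifts to O(eps T K), and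
every column satisfies (A^T ybar)_i > 1 - 3 eps, because a column covered worse than that would
force its coordinate x_i to grow beyond the bound 2 / |A_i|_\<infinity> given by the invariant.

Approximate complementary slackness bounds (1 - eps) 1^T p(x) by (1 + eps) 1^T x plus the full shift
and gain at x; averaging over the run gives 1^T ybar \<le> (1 + O(eps)) OPT on the good event, where
Algorithm 2 changes nothing. Feasibility of the output holds for every choice sequence, since
Algorithm 2 tops up each badly covered column through its largest entry.\<close>

lemma exp_le_one_plus_plus_square:
  fixes z :: real
  assumes "\<bar>z\<bar> \<le> 1"
  shows "exp z \<le> 1 + z + z\<^sup>2"
proof (cases "0 \<le> z")
  case True
  then show ?thesis using exp_bound[of z] assms by simp
next
  case False
  have "1 \<le> (1 - z) * (1 + z + z\<^sup>2)"
    using False by (simp add: algebra_simps power2_eq_square power3_eq_cube mult_nonneg_nonpos2)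
  also have "\<dots> \<le> exp (- z) * (1 + z + z\<^sup>2)"
    using exp_ge_add_one_self[of "- z"] assms zero_le_power2[of z] by (intro mult_right_mono) auto
  finally have "exp z * 1 \<le> exp z * (exp (- z) * (1 + z + z\<^sup>2))" by simp
  then show ?thesis by (simp add: exp_minus_inverse mult.assoc[symmetric])
qed

lemma abs_exp_minus_one_le:
  fixes z :: real
  assumes "\<bar>z\<bar> \<le> 1"
  shows "\<bar>exp z - 1\<bar> \<le> 2 * \<bar>z\<bar>"
proof -
  have "z\<^sup>2 \<le> \<bar>z\<bar>"
    using mult_left_le_one_le[of "\<bar>z\<bar>" "\<bar>z\<bar>"] assms by (simp add: power2_eq_square abs_mult[symmetric])
  then show ?thesis
    using exp_le_one_plus_plus_square[OF assms] exp_ge_add_one_self[of z] by linarith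
qed

lemma weighted_Cauchy_Schwarz:
  fixes a c :: "'a \<Rightarrow> real"
  assumes "\<And>i. i \<in> I \<Longrightarrow> 0 \<le> a i"
  shows "(\<Sum>i\<in>I. a i * c i)\<^sup>2 \<le> (\<Sum>i\<in>I. a i) * (\<Sum>i\<in>I. a i * (c i)\<^sup>2)"
proof -
  have "(\<Sum>i\<in>I. a i * c i) = (\<Sum>i\<in>I. sqrt (a i) * (sqrt (a i) * c i))"
    using assms by (intro sum.cong) (auto simp: mult.assoc[symmetric])
  moreover have "(\<Sum>i\<in>I. a i) = (\<Sum>i\<in>I. (sqrt (a i))\<^sup>2)"
    using assms by (intro sum.cong) auto
  moreover have "(\<Sum>i\<in>I. a i * (c i)\<^sup>2) = (\<Sum>i\<in>I. (sqrt (a i) * c i)\<^sup>2)"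
    using assms by (intro sum.cong) (auto simp: power_mult_distrib)
  ultimately show ?thesis
    using Cauchy_Schwarz_ineq_sum[of "\<lambda>i. sqrt (a i)" "\<lambda>i. sqrt (a i) * c i" I] by simp
qed

lemma exp_step_times_le:
  fixes a v g :: real
  assumes "0 < a" "a \<le> 1" "\<bar>v\<bar> \<le> 1" "v\<^sup>2 \<le> v * g"
  shows "(exp (- a * v) - 1) * g \<le> - a * (1 - a) * (v * g)"
proof (cases "0 < v")
  case True
  then have "0 < v * g" using assms(4) zero_less_power2[of v] by linarith
  then have "0 < g" using True by (simp add: zero_less_mult_iff)
  have "\<bar>- a * v\<bar> \<le> 1" using assms by (simp add: abs_mult mult_le_one)
  then have "exp (- a * v) - 1 \<le> - a * v + a\<^sup>2 * v\<^sup>2"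
    using exp_le_one_plus_plus_square[of "- a * v"] by (simp add: power_mult_distrib)
  then have "(exp (- a * v) - 1) * g \<le> (- a * v + a\<^sup>2 * v\<^sup>2) * g"
    using \<open>0 < g\<close> by (intro mult_right_mono) auto
  also have "\<dots> = - a * (v * g) + a\<^sup>2 * v * (v * g)" by (simp add: power2_eq_square algebra_simps)
  also have "\<dots> \<le> - a * (v * g) + a\<^sup>2 * (v * g)"
    using assms True \<open>0 < g\<close> by (simp add: mult_left_le_one_le mult.assoc[symmetric])
  finally show ?thesis by (simp add: power2_eq_square algebra_simps)
next
  case False
  have "0 \<le> v * g" using assms(4) zero_le_power2[of v] by linarith
  then have "g \<le> 0 \<or> v = 0" using False by (auto simp: zero_le_mult_iff)
  moreover have "- a * v \<le> exp (- a * v) - 1" using exp_ge_add_one_self[of "- a * v"] by linarith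
  ultimately have "(exp (- a * v) - 1) * g \<le> - a * (v * g)"
    by (auto intro: mult_right_mono_neg[THEN order.trans] simp: mult.assoc)
  also have "\<dots> \<le> - a * (1 - a) * (v * g)"
    using assms \<open>0 \<le> v * g\<close> by (simp add: algebra_simps)
  finally show ?thesis .
qed

lemma covering_value_arith:
  fixes e z :: real
  assumes e: "0 < e" "e \<le> 1/30" and z: "1 \<le> z"
  shows "(1 + 6 * e + e / 40) * ((1 + 2 * e) * z) + e + e / 4 * (1 + 200 * e + 200 * ((1 + 2 * e) * z))
    \<le> (1 + 65 * e) * z"
proof -
  define a b c where "a = e * z" and "b = e * e" and "c = e * e * z"
  have "b \<le> e / 30" unfolding b_def using e by (simp add: mult_left_le)
  moreover have "c \<le> a / 30"
    unfolding a_def c_def using e z mult_right_mono[of "e * e" "e / 30" z] by (simp add: mult_left_le)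
  moreover have "e \<le> a" unfolding a_def using e z by simp
  ultimately have "z + 2321/40 * a + 2241/20 * c + 5/4 * e + 50 * b \<le> z + 65 * a" using e by linarith
  then show ?thesis unfolding a_def b_def c_def by (simp add: field_simps)
qed

lemma rescaling_arith:
  fixes e :: real
  assumes e: "0 < e" "e \<le> 1/30"
  shows "1 + 65 * e \<le> (1 - e) * (1 - 3 * e) * (1 + 100 * e)"
proof -
  define b c where "b = e * e" and "c = e * e * e"
  have "b \<le> e / 30" unfolding b_def using e by (simp add: mult_left_le)
  moreover have "0 \<le> c" unfolding c_def using e by simp
  ultimately have "1 + 65 * e \<le> 1 + 96 * e - 397 * b + 300 * c" using e by linarith
  then show ?thesis unfolding b_def c_def by (simp add: algebra_simps)
qed

section \<open>Uniform choice sequences\<close>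

definition choice_lists :: "nat \<Rightarrow> nat \<Rightarrow> nat list set" where
  "choice_lists w k = {ts. length ts = k \<and> set ts \<subseteq> {..<w}}"

lemma finite_choice_lists: "finite (choice_lists w k)"
  using finite_lists_length_eq[of "{..<w}" k] unfolding choice_lists_def by (simp add: conj_commute)

lemma card_choice_lists: "card (choice_lists w k) = w ^ k"
  using card_lists_length_eq[of "{..<w}" k] unfolding choice_lists_def by (simp add: conj_commute)

lemma choice_lists_Suc:
  "choice_lists w (Suc k) = (\<lambda>(pre, t). pre @ [t]) ` (choice_lists w k \<times> {..<w})"
proof (intro set_eqI iffI)
  fix ts assume "ts \<in> choice_lists w (Suc k)"
  then have "length ts = Suc k" "set ts \<subseteq> {..<w}" by (auto simp: choice_lists_def)
  then obtain pre t where "ts = pre @ [t]" by (metis length_Suc_conv_rev)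
  then show "ts \<in> (\<lambda>(pre, t). pre @ [t]) ` (choice_lists w k \<times> {..<w})"
    using \<open>length ts = Suc k\<close> \<open>set ts \<subseteq> _\<close> by (force simp: choice_lists_def)
qed (auto simp: choice_lists_def)

lemma sum_choice_lists_Suc:
  "(\<Sum>ts\<in>choice_lists w (Suc k). F ts) = (\<Sum>pre\<in>choice_lists w k. \<Sum>t<w. F (pre @ [t]))"
proof -
  have "inj_on (\<lambda>(pre, t). pre @ [t]) (choice_lists w k \<times> {..<w})"
    by (auto simp: inj_on_def)
  then show ?thesis
    unfolding choice_lists_Suc by (simp add: sum.reindex sum.cartesian_product split_def)
qed

text \<open>Sums over all choice lists are expectations under uniform independent choices; the
hypothesis says that F is a supermartingale (up to the normalising factor w per step).\<close>

lemma sum_choice_lists_supermartingale: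
  fixes F :: "nat list \<Rightarrow> real"
  assumes "\<And>k pre. k < N \<Longrightarrow> pre \<in> choice_lists w k \<Longrightarrow> (\<Sum>t<w. F (pre @ [t])) \<le> real w * F pre"
  shows "(\<Sum>ts\<in>choice_lists w N. F ts) \<le> real w ^ N * F []"
  using assms
proof (induction N)
  case 0
  have "choice_lists w 0 = {[]}" by (auto simp: choice_lists_def)
  then show ?case by simp
next
  case (Suc N)
  have "(\<Sum>ts\<in>choice_lists w (Suc N). F ts) = (\<Sum>pre\<in>choice_lists w N. \<Sum>t<w. F (pre @ [t]))"
    by (rule sum_choice_lists_Suc)
  also have "\<dots> \<le> (\<Sum>pre\<in>choice_lists w N. real w * F pre)"
    using Suc.prems by (intro sum_mono) auto
  also have "\<dots> = real w * (\<Sum>pre\<in>choice_lists w N. F pre)" by (simp add: sum_distrib_left)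
  also have "\<dots> \<le> real w * (real w ^ N * F [])"
  proof -
    have "(\<Sum>pre\<in>choice_lists w N. F pre) \<le> real w ^ N * F []"
    proof (rule Suc.IH)
      fix k pre assume "k < N" "pre \<in> choice_lists w k"
      then show "(\<Sum>t<w. F (pre @ [t])) \<le> real w * F pre" by (intro Suc.prems) auto
    qed
    then show ?thesis by (intro mult_left_mono) auto
  qed
  finally show ?case by simp
qed

lemma card_times_le_sum:
  fixes F :: "'a \<Rightarrow> real"
  assumes "finite S" "\<And>x. x \<in> S \<Longrightarrow> 0 \<le> F x" "B \<subseteq> S" "\<And>x. x \<in> B \<Longrightarrow> a \<le> F x"
  shows "real (card B) * a \<le> (\<Sum>x\<in>S. F x)"
proof -
  have "real (card B) * a = (\<Sum>x\<in>B. a)" by simp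
  also have "\<dots> \<le> (\<Sum>x\<in>B. F x)" using assms by (intro sum_mono) auto
  also have "\<dots> \<le> (\<Sum>x\<in>S. F x)" using assms by (intro sum_mono2) (auto intro: finite_subset)
  finally show ?thesis .
qed

context
  fixes e g :: real
  assumes e: "0 < e" "e < 1" and g: "-1 \<le> g"
begin

lemma abs_clip_le_one: "\<bar>clip e g\<bar> \<le> 1"
  using e g unfolding clip_def by auto

lemma clip_square_le: "(clip e g)\<^sup>2 \<le> clip e g * g"
  using e g unfolding clip_def by (auto simp: power2_eq_square mult_le_cancel_left1 mult_le_cancel_right1)

lemma clip_le_add: "clip e g \<le> g + e"
  using e g unfolding clip_def by auto

lemma clip_eq_0_or_gt: "clip e g = 0 \<or> e < \<bar>clip e g\<bar>"
  using e g unfolding clip_def by auto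

lemma le_clip_add: "g \<le> clip e g + e + clip e g * g"
  using e g unfolding clip_def by (auto simp: mult_le_cancel_left1)

end

text \<open>The buckets partition (e, e 2^w], so a value of modulus in (e, 1] lands in exactly one
of them once 1 \<le> e 2^w.\<close>

lemma sum_bucket_diff_upto:
  fixes v e :: real and \<phi> :: "real \<Rightarrow> real"
  assumes "e < \<bar>v\<bar>" "0 \<le> e"
  shows "(\<Sum>t<w. \<phi> (bucket e t v) - \<phi> 0) = (if \<bar>v\<bar> \<le> e * 2 ^ w then \<phi> v - \<phi> 0 else 0)"
proof (induction w)
  case 0
  then show ?case using assms by simp
next
  case (Suc w)
  have "e * 2 ^ w \<le> e * 2 ^ Suc w" using assms by (intro mult_left_mono) auto
  then show ?case
    using Suc.IH by (cases "\<bar>v\<bar> \<le> e * 2 ^ w"; cases "\<bar>v\<bar> \<le> e * 2 ^ Suc w") (auto simp: bucket_def)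
qed

lemma sum_bucket_diff:
  fixes v e :: real and \<phi> :: "real \<Rightarrow> real"
  assumes "v = 0 \<or> e < \<bar>v\<bar>" "\<bar>v\<bar> \<le> 1" "1 \<le> e * 2 ^ w" "0 \<le> e"
  shows "(\<Sum>t<w. \<phi> (bucket e t v) - \<phi> 0) = \<phi> v - \<phi> 0"
  using assms sum_bucket_diff_upto[of e v \<phi> w] by (auto simp: bucket_def)

locale packing_instance =
  fixes A :: "nat \<Rightarrow> nat \<Rightarrow> real" and m n :: nat and eps :: real
  assumes n_pos: "0 < n"
    and A_nonneg: "\<And>j i. j < m \<Longrightarrow> i < n \<Longrightarrow> 0 \<le> A j i"
    and column_nonzero: "\<And>i. i < n \<Longrightarrow> \<exists>j<m. A j i \<noteq> 0"
    and Min_colnorm: "Min (colnorm A m ` {..<n}) = 1"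
    and eps_pos: "0 < eps" and eps_le: "eps \<le> 1/30"
begin

abbreviation \<mu> where "\<mu> \<equiv> mu m n eps"
abbreviation \<alpha> where "\<alpha> \<equiv> alpha m n eps"
abbreviation w where "w \<equiv> wpar eps"
abbreviation T where "T \<equiv> Tpar m n eps"

lemma m_pos: "0 < m"
  using column_nonzero[OF n_pos] by auto

lemma colnorm_attained: "i < n \<Longrightarrow> \<exists>j<m. A j i = colnorm A m i"
proof -
  assume i: "i < n"
  have "colnorm A m i \<in> (\<lambda>j. \<bar>A j i\<bar>) ` {..<m}"
    unfolding colnorm_def using m_pos by (intro Max_in) auto
  then show ?thesis using A_nonneg[OF _ i] by auto
qed

lemma A_le_colnorm: "j < m \<Longrightarrow> i < n \<Longrightarrow> A j i \<le> colnorm A m i"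
  unfolding colnorm_def by (rule order.trans[OF abs_ge_self], intro Max_ge) auto

lemma colnorm_ge_one: "i < n \<Longrightarrow> 1 \<le> colnorm A m i"
  using Min_le[of "colnorm A m ` {..<n}" "colnorm A m i"] Min_colnorm by auto

lemma colnorm_eq_one: "\<exists>i<n. colnorm A m i = 1"
proof -
  have "Min (colnorm A m ` {..<n}) \<in> colnorm A m ` {..<n}" using n_pos by (intro Min_in) auto
  then show ?thesis using Min_colnorm by auto
qed

definition L :: real where "L = ln (real n * real m / eps)"

lemma ln_inv_eps_ge_3: "3 \<le> ln (1 / eps)"
proof -
  have "exp (1::real) ^ 3 \<le> 3 ^ 3" using exp_bound[of 1] by (intro power_mono) auto
  then have "exp (3::real) \<le> 27" using exp_of_nat_mult[of 3 "1::real"] by simp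
  also have "27 \<le> 1 / eps" using eps_le eps_pos by (simp add: field_simps)
  finally show ?thesis using eps_pos by (subst ln_ge_iff) auto
qed

lemma ln_n_div_eps_le_L: "ln (real n / eps) \<le> L"
proof -
  have "real n * 1 \<le> real n * real m" using m_pos by (intro mult_left_mono) auto
  then show ?thesis
    unfolding L_def using eps_pos n_pos by (subst ln_le_cancel_iff) (auto simp: divide_right_mono)
qed

lemma ln_inv_eps_le_ln_n_div_eps: "ln (1 / eps) \<le> ln (real n / eps)"
  using n_pos eps_pos by (subst ln_le_cancel_iff) (auto simp: divide_right_mono)

lemma L_ge_3: "3 \<le> L"
  using ln_inv_eps_ge_3 ln_inv_eps_le_ln_n_div_eps ln_n_div_eps_le_L by linarith

lemma mu_eq: "\<mu> = eps / (4 * L)"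
  unfolding mu_def L_def ..

lemma alpha_eq: "\<alpha> = eps / (80 * L)"
  unfolding alpha_def mu_eq by simp

lemma mu_pos: "0 < \<mu>"
  using mu_eq eps_pos L_ge_3 by simp

lemma mu_le_one: "\<mu> \<le> 1"
  using mu_eq eps_pos L_ge_3 eps_le by (simp add: divide_le_eq)

lemma alpha_pos: "0 < \<alpha>"
  using alpha_eq eps_pos L_ge_3 by simp

lemma alpha_le: "\<alpha> \<le> eps / 240"
  unfolding alpha_eq by (rule divide_left_mono) (use L_ge_3 eps_pos in auto)

lemma m_exp_le_eps:
  assumes "eps / 2 \<le> \<delta>"
  shows "real m * exp (- \<delta> / \<mu>) \<le> eps"
proof -
  have "- \<delta> / \<mu> \<le> - (eps / 2) / \<mu>" using assms mu_pos by (intro divide_right_mono) auto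
  also have "\<dots> = - 2 * L" using mu_eq eps_pos L_ge_3 by simp
  also have "\<dots> \<le> - L" using L_ge_3 by simp
  finally have "real m * exp (- \<delta> / \<mu>) \<le> real m * exp (- L)" by (intro mult_left_mono) auto
  also have "\<dots> = eps / real n"
    unfolding L_def using n_pos m_pos eps_pos by (simp add: exp_minus)
  also have "\<dots> \<le> eps" using n_pos eps_pos by (simp add: divide_le_eq)
  finally show ?thesis .
qed

lemma mu_ln_le: "\<mu> * ln (3 * real n / \<mu>) \<le> 2 * eps"
proof -
  have pos: "0 < L" "0 < real n / eps" using L_ge_3 n_pos eps_pos by auto
  have "3 * real n / \<mu> = 12 * (L * (real n / eps))"
    unfolding mu_eq using L_ge_3 eps_pos by (simp add: field_simps)
  then have "ln (3 * real n / \<mu>) = ln 12 + (ln L + ln (real n / eps))"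
    using ln_mult_pos[OF _ mult_pos_pos[OF pos], of 12] ln_mult_pos[OF pos] by simp
  also have "\<dots> \<le> 11 + (L + L)"
    using ln_le_minus_one[of 12] ln_le_minus_one[of L] L_ge_3 ln_n_div_eps_le_L by simp
  finally have "\<mu> * ln (3 * real n / \<mu>) \<le> \<mu> * (11 + 2 * L)" using mu_pos by (intro mult_left_mono) auto
  also have "\<dots> = eps * (11 + 2 * L) / (4 * L)" using mu_eq by simp
  also have "\<dots> \<le> 2 * eps" using L_ge_3 eps_pos by (simp add: divide_le_eq)
  finally show ?thesis .
qed

lemma log_inv_eps_gt_4: "4 < log 2 (1 / eps)"
proof -
  have "2 powr 4 < 1 / eps" using eps_le eps_pos by (simp add: field_simps powr_numeral)
  then show ?thesis using eps_pos by (subst less_log_iff) auto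
qed

lemma w_bounds: "log 2 (1 / eps) \<le> real w" "real w \<le> log 2 (1 / eps) + 1"
  unfolding wpar_def using log_inv_eps_gt_4 by (auto simp: of_nat_ceiling)

lemma w_ge_5: "5 \<le> w"
  using log_inv_eps_gt_4 w_bounds(1) by linarith

lemma one_le_eps_two_pow_w: "1 \<le> eps * 2 ^ w"
proof -
  have "1 / eps = 2 powr (log 2 (1 / eps))" using eps_pos by simp
  also have "\<dots> \<le> 2 powr (real w)" using w_bounds by (intro powr_mono) auto
  also have "\<dots> = 2 ^ w" by (simp add: powr_realpow)
  finally show ?thesis using eps_pos by (simp add: field_simps)
qed

lemma w_le_two_ln_inv_eps: "real w \<le> 2 * ln (1 / eps)"
proof -
  have "log 2 (1 / eps) \<le> ln (1 / eps) / (2/3)"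
    unfolding log_def using ln2_ge_two_thirds ln_inv_eps_ge_3 by (intro divide_left_mono) auto
  also have "\<dots> = 3/2 * ln (1 / eps)" by simp
  finally show ?thesis using w_bounds(2) ln_inv_eps_ge_3 by linarith
qed

lemma w_le_two_thirds_ln_inv_eps_sq: "real w \<le> 2/3 * (ln (1 / eps))\<^sup>2"
proof -
  have "3 * ln (1 / eps) \<le> ln (1 / eps) * ln (1 / eps)"
    using ln_inv_eps_ge_3 by (intro mult_right_mono) auto
  then show ?thesis using w_le_two_ln_inv_eps unfolding power2_eq_square by linarith
qed

lemma alpha_w_le: "\<alpha> * real w \<le> eps / 40"
proof -
  have "real w \<le> 2 * L"
    using w_le_two_ln_inv_eps ln_inv_eps_le_ln_n_div_eps ln_n_div_eps_le_L by linarith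
  then have "\<alpha> * real w \<le> eps / (80 * L) * (2 * L)"
    unfolding alpha_eq using eps_pos L_ge_3 by (intro mult_left_mono) auto
  also have "\<dots> = eps / 40" using L_ge_3 by simp
  finally show ?thesis .
qed

lemma ln_two_n_ge: "2/3 \<le> ln (2 * real n)"
proof -
  have "ln 2 \<le> ln (2 * real n)" using n_pos by (subst ln_le_cancel_iff) auto
  then show ?thesis using ln2_ge_two_thirds by linarith
qed

lemma T_ge:
  "6 * real w * ln (2 * real n) / (\<alpha> * eps) \<le> real T"
  "2 * real w ^ 2 * ln (real n / eps) / eps ^ 2 \<le> real T"
  unfolding Tpar_def by (auto intro: order.trans[OF _ of_nat_ceiling])

lemma T_pos: "0 < T"
proof -
  have "0 < 6 * real w * ln (2 * real n) / (\<alpha> * eps)"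
    using w_ge_5 ln_two_n_ge alpha_pos eps_pos by (intro divide_pos_pos mult_pos_pos) auto
  then show ?thesis using T_ge(1) by linarith
qed

lemma w_div_alpha_T_le: "real w / (\<alpha> * real T) \<le> eps / 4"
proof -
  have "4 * real w \<le> 6 * real w * ln (2 * real n)"
    using ln_two_n_ge mult_left_mono[of "2/3" "ln (2 * real n)" "6 * real w"] by simp
  also have "\<dots> \<le> real T * (\<alpha> * eps)"
    using T_ge(1) alpha_pos eps_pos by (simp add: divide_le_eq)
  finally show ?thesis using alpha_pos T_pos eps_pos by (simp add: field_simps)
qed

end

section \<open>The potential and one step of Algorithm 1\<close>

context packing_instance
begin

abbreviation ax where "ax x j \<equiv> Amul A n x j"
abbreviation p where "p x j \<equiv> pvec A m n eps x j"
abbreviation g where "g x i \<equiv> grad A m n eps x i"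
abbreviation xi where "xi x i \<equiv> clip eps (g x i)"
abbreviation eta where "eta t x i \<equiv> bucket eps t (xi x i)"

definition total :: "(nat \<Rightarrow> real) \<Rightarrow> real" where
  "total x = (\<Sum>i<n. x i)"

definition f :: "(nat \<Rightarrow> real) \<Rightarrow> real" where
  "f x = - total x + \<mu> * (\<Sum>j<m. p x j)"

definition gain :: "(nat \<Rightarrow> real) \<Rightarrow> nat \<Rightarrow> real" where
  "gain x t = (\<Sum>i<n. x i * (eta t x i * g x i))"

lemma p_pos: "0 < p x j"
  unfolding pvec_def by simp

lemma grad_plus_one: "g x i + 1 = (\<Sum>j<m. A j i * p x j)"
  unfolding grad_def by simp

lemma grad_ge: "i < n \<Longrightarrow> -1 \<le> g x i"
  using grad_plus_one[of x i] A_nonneg p_pos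
    sum_nonneg[of "{..<m}" "\<lambda>j. A j i * p x j"] by (simp add: less_imp_le)

lemma eps_lt_one: "eps < 1"
  using eps_le by simp

lemmas clip_grad_facts =
  abs_clip_le_one clip_square_le clip_le_add clip_eq_0_or_gt le_clip_add
lemmas xi_facts = clip_grad_facts[OF eps_pos eps_lt_one grad_ge]

lemma eta_facts:
  assumes "i < n"
  shows "\<bar>eta t x i\<bar> \<le> 1" "(eta t x i)\<^sup>2 \<le> eta t x i * g x i" "0 \<le> eta t x i * g x i"
    "(eta t x i)\<^sup>2 * (g x i + 1) \<le> 2 * (eta t x i * g x i)"
proof -
  show abs: "\<bar>eta t x i\<bar> \<le> 1" and sq: "(eta t x i)\<^sup>2 \<le> eta t x i * g x i"
    using xi_facts(1,2)[OF assms, of x] by (auto simp: bucket_def)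
  then show nonneg: "0 \<le> eta t x i * g x i" using zero_le_power2[of "eta t x i"] by linarith
  have "eta t x i * (eta t x i * g x i) \<le> \<bar>eta t x i\<bar> * (eta t x i * g x i)"
    by (rule mult_right_mono[OF abs_ge_self nonneg])
  also have "\<dots> \<le> eta t x i * g x i"
    using mult_right_mono[OF abs nonneg] by simp
  finally have "eta t x i * (eta t x i * g x i) \<le> eta t x i * g x i" .
  then show "(eta t x i)\<^sup>2 * (g x i + 1) \<le> 2 * (eta t x i * g x i)"
    using sq by (simp add: power2_eq_square algebra_simps)
qed

lemma sum_eta:
  fixes \<phi> :: "real \<Rightarrow> real"
  assumes "i < n" "\<phi> 0 = 0"
  shows "(\<Sum>t<w. \<phi> (eta t x i)) = \<phi> (xi x i)"
  using sum_bucket_diff[of "xi x i" eps w \<phi>] xi_facts(1,4)[OF assms(1)] one_le_eps_two_pow_w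
    eps_pos assms(2) by simp

lemma p_dot_Amul: "(\<Sum>j<m. p x j * ax y j) = (\<Sum>i<n. y i * (g x i + 1))"
proof -
  have "(\<Sum>j<m. p x j * ax y j) = (\<Sum>i<n. \<Sum>j<m. p x j * (A j i * y i))"
    unfolding Amul_def by (simp add: sum_distrib_left sum.swap[of _ "{..<m}"])
  also have "\<dots> = (\<Sum>i<n. y i * (\<Sum>j<m. A j i * p x j))"
    by (simp add: sum_distrib_left mult_ac)
  finally show ?thesis by (simp add: grad_plus_one)
qed

lemma f_update_le:
  assumes "\<And>j. j < m \<Longrightarrow> \<bar>ax (\<lambda>i. x i * c i) j\<bar> \<le> \<mu>"
  shows "f (\<lambda>i. x i + x i * c i) \<le>
    f x + (\<Sum>i<n. x i * c i * g x i) + (\<Sum>j<m. p x j * (ax (\<lambda>i. x i * c i) j)\<^sup>2) / \<mu>"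
proof -
  define d where "d j = ax (\<lambda>i. x i * c i) j" for j
  have p_update: "p (\<lambda>i. x i + x i * c i) j = p x j * exp (d j / \<mu>)" for j
  proof -
    have "(ax (\<lambda>i. x i + x i * c i) j - 1) / \<mu> = (ax x j - 1) / \<mu> + d j / \<mu>"
      unfolding d_def Amul_def using mu_pos by (simp add: distrib_left sum.distrib field_simps)
    then show ?thesis unfolding pvec_def by (simp add: exp_add)
  qed
  have row: "\<mu> * p (\<lambda>i. x i + x i * c i) j \<le> \<mu> * p x j + p x j * d j + p x j * (d j)\<^sup>2 / \<mu>"
    if "j < m" for j
  proof -
    have "\<bar>d j / \<mu>\<bar> \<le> 1" using assms[OF that] mu_pos unfolding d_def by simp
    then have "exp (d j / \<mu>) \<le> 1 + d j / \<mu> + (d j / \<mu>)\<^sup>2" by (rule exp_le_one_plus_plus_square)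
    then have "\<mu> * p x j * exp (d j / \<mu>) \<le> \<mu> * p x j * (1 + d j / \<mu> + (d j / \<mu>)\<^sup>2)"
      using mu_pos p_pos[of x j] by (intro mult_left_mono) auto
    also have "\<dots> = \<mu> * p x j + p x j * d j + p x j * (d j)\<^sup>2 / \<mu>"
      using mu_pos by (simp add: field_simps power2_eq_square)
    finally show ?thesis unfolding p_update by (simp add: mult.assoc)
  qed
  have "\<mu> * (\<Sum>j<m. p (\<lambda>i. x i + x i * c i) j) \<le>
      \<mu> * (\<Sum>j<m. p x j) + (\<Sum>j<m. p x j * d j) + (\<Sum>j<m. p x j * (d j)\<^sup>2) / \<mu>"
    using sum_mono[of "{..<m}", OF row]
    by (simp add: sum_distrib_left sum.distrib sum_divide_distrib)
  moreover have "(\<Sum>j<m. p x j * d j) = (\<Sum>i<n. x i * c i * g x i) + (\<Sum>i<n. x i * c i)"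
    unfolding d_def p_dot_Amul by (simp add: algebra_simps sum.distrib)
  moreover have "total (\<lambda>i. x i + x i * c i) = total x + (\<Sum>i<n. x i * c i)"
    unfolding total_def by (simp add: sum.distrib)
  ultimately show ?thesis
    unfolding f_def d_def by linarith
qed

lemma Amul_nonneg: "(\<And>i. i < n \<Longrightarrow> 0 \<le> x i) \<Longrightarrow> j < m \<Longrightarrow> 0 \<le> ax x j"
  unfolding Amul_def using A_nonneg by (intro sum_nonneg mult_nonneg_nonneg) auto

lemma Amul_square_le:
  assumes "\<And>i. i < n \<Longrightarrow> 0 \<le> x i" "j < m"
  shows "(ax (\<lambda>i. x i * c i) j)\<^sup>2 \<le> ax x j * ax (\<lambda>i. x i * (c i)\<^sup>2) j"
  using weighted_Cauchy_Schwarz[of "{..<n}" "\<lambda>i. A j i * x i" c] assms A_nonneg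
  unfolding Amul_def by (simp add: mult.assoc)

lemma gain_nonneg: "(\<And>i. i < n \<Longrightarrow> 0 \<le> x i) \<Longrightarrow> 0 \<le> gain x t"
  unfolding gain_def by (intro sum_nonneg) (metis eta_facts(3) lessThan_iff mult_nonneg_nonneg)

definition step_change :: "nat \<Rightarrow> (nat \<Rightarrow> real) \<Rightarrow> nat \<Rightarrow> real" where
  "step_change t x i = exp (- \<alpha> * eta t x i) - 1"

lemma alg1_step_eq: "alg1_step A m n eps t x = (\<lambda>i. x i + x i * step_change t x i)"
  unfolding alg1_step_def step_change_def by (simp add: algebra_simps)

lemma alpha_le_one_240: "\<alpha> \<le> 1/240"
  using alpha_le eps_le by simp

lemma abs_step_change_le:
  assumes "i < n"
  shows "\<bar>step_change t x i\<bar> \<le> 2 * \<alpha> * \<bar>eta t x i\<bar>"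
proof -
  have "\<bar>- \<alpha> * eta t x i\<bar> \<le> 1"
    using eta_facts(1)[OF assms, of t x] alpha_pos alpha_le_one_240 by (simp add: abs_mult mult_le_one)
  then have "\<bar>exp (- \<alpha> * eta t x i) - 1\<bar> \<le> 2 * \<bar>- \<alpha> * eta t x i\<bar>"
    by (rule abs_exp_minus_one_le)
  then show ?thesis unfolding step_change_def using alpha_pos by (simp add: abs_mult)
qed

lemma abs_step_change_le_two_alpha:
  assumes "i < n"
  shows "\<bar>step_change t x i\<bar> \<le> 2 * \<alpha>"
proof -
  have "2 * \<alpha> * \<bar>eta t x i\<bar> \<le> 2 * \<alpha> * 1"
    using eta_facts(1)[OF assms] alpha_pos by (intro mult_left_mono) auto
  then show ?thesis using abs_step_change_le[OF assms, of t x] by linarith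
qed

context
  fixes x :: "nat \<Rightarrow> real" and t :: nat
  assumes x: "\<And>i. i < n \<Longrightarrow> 0 \<le> x i" and ax: "\<And>j. j < m \<Longrightarrow> ax x j \<le> 2"
begin

lemma abs_row_change_le: "j < m \<Longrightarrow> \<bar>ax (\<lambda>i. x i * step_change t x i) j\<bar> \<le> \<mu>"
proof -
  assume j: "j < m"
  have "\<bar>ax (\<lambda>i. x i * step_change t x i) j\<bar> \<le> (\<Sum>i<n. A j i * x i * (2 * \<alpha>))"
    unfolding Amul_def
  proof (rule order.trans[OF sum_abs sum_mono])
    fix i assume "i \<in> {..<n}"
    then show "\<bar>A j i * (x i * step_change t x i)\<bar> \<le> A j i * x i * (2 * \<alpha>)"
      using A_nonneg[OF j] x abs_step_change_le_two_alpha[of i t x]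
        mult_left_mono[of "\<bar>step_change t x i\<bar>" "2 * \<alpha>" "A j i * x i"]
      by (simp add: abs_mult mult.assoc)
  qed
  also have "\<dots> = 2 * \<alpha> * ax x j" unfolding Amul_def by (simp add: sum_distrib_left mult_ac)
  also have "\<dots> \<le> \<mu>" using ax[OF j] alpha_pos unfolding alpha_def by simp
  finally show ?thesis .
qed

lemma first_order_change_le:
  "(\<Sum>i<n. x i * step_change t x i * g x i) \<le> - \<alpha> * (1 - \<alpha>) * gain x t"
proof -
  have "(\<Sum>i<n. x i * step_change t x i * g x i) \<le> (\<Sum>i<n. x i * (- \<alpha> * (1 - \<alpha>) * (eta t x i * g x i)))"
  proof (intro sum_mono)
    fix i assume "i \<in> {..<n}"
    then have i: "i < n" by simp
    have "step_change t x i * g x i \<le> - \<alpha> * (1 - \<alpha>) * (eta t x i * g x i)"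
      unfolding step_change_def using alpha_pos alpha_le_one_240 eta_facts(1,2)[OF i]
      by (intro exp_step_times_le) auto
    from mult_left_mono[OF this x[OF i]]
    show "x i * step_change t x i * g x i \<le> x i * (- \<alpha> * (1 - \<alpha>) * (eta t x i * g x i))"
      by (simp add: mult.assoc)
  qed
  then show ?thesis unfolding gain_def by (simp add: sum_distrib_left mult_ac)
qed

lemma second_order_change_le:
  "(\<Sum>j<m. p x j * (ax (\<lambda>i. x i * step_change t x i) j)\<^sup>2) \<le> 16 * \<alpha>\<^sup>2 * gain x t"
proof -
  let ?c = "step_change t x"
  have "(\<Sum>j<m. p x j * (ax (\<lambda>i. x i * ?c i) j)\<^sup>2) \<le> (\<Sum>j<m. p x j * (2 * ax (\<lambda>i. x i * (?c i)\<^sup>2) j))"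
  proof (intro sum_mono mult_left_mono)
    fix j assume "j \<in> {..<m}"
    then have "ax x j * ax (\<lambda>i. x i * (?c i)\<^sup>2) j \<le> 2 * ax (\<lambda>i. x i * (?c i)\<^sup>2) j"
      using ax x by (intro mult_right_mono Amul_nonneg) auto
    then show "(ax (\<lambda>i. x i * ?c i) j)\<^sup>2 \<le> 2 * ax (\<lambda>i. x i * (?c i)\<^sup>2) j"
      using Amul_square_le[of x j ?c, OF x] \<open>j \<in> {..<m}\<close> by simp
  qed (use p_pos less_imp_le in auto)
  also have "\<dots> = 2 * (\<Sum>i<n. x i * (?c i)\<^sup>2 * (g x i + 1))"
    using p_dot_Amul[of x "\<lambda>i. x i * (?c i)\<^sup>2"] by (simp add: sum_distrib_left[symmetric] mult_ac)
  also have "\<dots> \<le> 2 * (\<Sum>i<n. x i * (8 * \<alpha>\<^sup>2 * (eta t x i * g x i)))"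
  proof (intro mult_left_mono sum_mono)
    fix i assume i: "i \<in> {..<n}"
    have "(?c i)\<^sup>2 \<le> 4 * \<alpha>\<^sup>2 * (eta t x i)\<^sup>2"
      using power_mono[OF abs_step_change_le[of i t x] abs_ge_zero, of 2] i by (simp add: power_mult_distrib)
    from mult_right_mono[OF this, of "g x i + 1"]
    have "(?c i)\<^sup>2 * (g x i + 1) \<le> 4 * \<alpha>\<^sup>2 * ((eta t x i)\<^sup>2 * (g x i + 1))"
      using grad_ge[of i x] i by (simp add: mult.assoc)
    also have "\<dots> \<le> 4 * \<alpha>\<^sup>2 * (2 * (eta t x i * g x i))"
      using eta_facts(4)[of i t x] i by (intro mult_left_mono) auto
    finally show "x i * (?c i)\<^sup>2 * (g x i + 1) \<le> x i * (8 * \<alpha>\<^sup>2 * (eta t x i * g x i))"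
      using x i by (simp add: mult.assoc mult_left_mono)
  qed simp
  also have "\<dots> = 16 * \<alpha>\<^sup>2 * gain x t" unfolding gain_def by (simp add: sum_distrib_left mult_ac)
  finally show ?thesis .
qed

text \<open>The step size \<alpha> = \<mu>/20 makes the second-order term at most 4/5 of the first-order gain.\<close>

lemma f_alg1_step_le: "f (alg1_step A m n eps t x) \<le> f x - \<alpha> / 10 * gain x t"
proof -
  have "f (alg1_step A m n eps t x) \<le> f x - \<alpha> * (1 - \<alpha>) * gain x t + 16 * \<alpha>\<^sup>2 * gain x t / \<mu>"
    unfolding alg1_step_eq
    using f_update_le[of x "step_change t x", OF abs_row_change_le] first_order_change_le
      divide_right_mono[OF second_order_change_le less_imp_le[OF mu_pos]]
    by linarith
  also have "16 * \<alpha>\<^sup>2 * gain x t / \<mu> = 4/5 * \<alpha> * gain x t"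
    unfolding alpha_def using mu_pos by (simp add: power2_eq_square)
  also have "f x - \<alpha> * (1 - \<alpha>) * gain x t + 4/5 * \<alpha> * gain x t \<le> f x - \<alpha> / 10 * gain x t"
  proof -
    have "\<alpha> * (\<alpha> * gain x t) \<le> \<alpha> * (1/10 * gain x t)"
      using alpha_pos alpha_le_one_240 gain_nonneg[of x t, OF x]
      by (intro mult_left_mono mult_right_mono) auto
    then show ?thesis by (simp add: algebra_simps)
  qed
  finally show ?thesis .
qed

end

end

section \<open>The invariant and the value of the packing LP\<close>

context packing_instance
begin

definition invariant :: "(nat \<Rightarrow> real) \<Rightarrow> bool" where
  "invariant x \<longleftrightarrow> (\<forall>i<n. 0 < x i) \<and> (\<forall>j<m. ax x j \<le> 1 + 2 * eps) \<and> f x \<le> eps"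

lemma invariant_nonneg: "invariant x \<Longrightarrow> i < n \<Longrightarrow> 0 \<le> x i"
  unfolding invariant_def by (auto intro: less_imp_le)

lemma invariant_Amul_le_two: "invariant x \<Longrightarrow> j < m \<Longrightarrow> ax x j \<le> 2"
  unfolding invariant_def using eps_le by force

lemma coord_le_Amul:
  assumes "\<And>i. i < n \<Longrightarrow> 0 \<le> x i" "i < n"
  shows "\<exists>j<m. x i \<le> ax x j"
proof -
  obtain j where j: "j < m" "A j i = colnorm A m i" using colnorm_attained[OF assms(2)] by auto
  have "A j i * x i \<le> ax x j"
    unfolding Amul_def using assms A_nonneg[OF j(1)]
    by (intro member_le_sum[of i "{..<n}" "\<lambda>i. A j i * x i"]) auto
  moreover have "1 * x i \<le> A j i * x i"
    using j colnorm_ge_one[OF assms(2)] assms by (intro mult_right_mono) auto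
  ultimately show ?thesis using j by auto
qed

lemma invariant_x0: "invariant (x0 A m n eps)"
proof -
  let ?x = "x0 A m n eps"
  have pos: "0 < ?x i" if "i < n" for i
    unfolding x0_def using colnorm_ge_one[OF that] n_pos eps_le by (intro divide_pos_pos mult_pos_pos) auto
  have row: "ax ?x j \<le> 1 - eps / 2" if j: "j < m" for j
  proof -
    have "ax ?x j \<le> (\<Sum>i<n. (1 - eps / 2) / real n)"
      unfolding Amul_def
    proof (intro sum_mono)
      fix i assume "i \<in> {..<n}"
      then have i: "i < n" by simp
      have "A j i * ?x i = (1 - eps / 2) / real n * (A j i / colnorm A m i)"
        unfolding x0_def by (simp add: field_simps)
      also have "\<dots> \<le> (1 - eps / 2) / real n * 1"
        using A_le_colnorm[OF j i] colnorm_ge_one[OF i] eps_le n_pos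
        by (intro mult_left_mono) (auto simp: divide_le_eq)
      finally show "A j i * ?x i \<le> (1 - eps / 2) / real n" by simp
    qed
    also have "\<dots> = 1 - eps / 2" using n_pos by simp
    finally show ?thesis .
  qed
  have "(\<Sum>j<m. p ?x j) \<le> (\<Sum>j<m. exp (- (eps / 2) / \<mu>))"
  proof (intro sum_mono)
    fix j assume "j \<in> {..<m}"
    then have "(ax ?x j - 1) / \<mu> \<le> - (eps / 2) / \<mu>"
      using row[of j] mu_pos by (intro divide_right_mono) auto
    then show "p ?x j \<le> exp (- (eps / 2) / \<mu>)" unfolding pvec_def by simp
  qed
  also have "\<dots> \<le> eps" using m_exp_le_eps[of "eps / 2"] by simp
  finally have "\<mu> * (\<Sum>j<m. p ?x j) \<le> 1 * eps"
    using mu_le_one mu_pos eps_pos by (intro mult_mono) (auto intro: sum_nonneg less_imp_le p_pos)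
  moreover have "0 \<le> total ?x" unfolding total_def using pos by (intro sum_nonneg) (auto intro: less_imp_le)
  ultimately have "f ?x \<le> eps" unfolding f_def by simp
  then show ?thesis unfolding invariant_def using pos row eps_pos by force
qed

text \<open>A small potential forces every row constraint to hold up to 2 eps: the exponential
penalty of a violated row alone would exceed the potential.\<close>

lemma Amul_le_of_f_le:
  assumes "\<And>i. i < n \<Longrightarrow> 0 \<le> x i" "total x \<le> 2 * real n" "f x \<le> eps" "j < m"
  shows "ax x j \<le> 1 + 2 * eps"
proof -
  have "p x j \<le> (\<Sum>j<m. p x j)"
    using assms(4) p_pos by (intro member_le_sum) (auto intro: less_imp_le)
  then have "\<mu> * p x j \<le> f x + total x"
    unfolding f_def using mu_pos by (simp add: mult_left_mono)
  also have "\<dots> \<le> 3 * real n" using assms(2,3) eps_le n_pos by simp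
  finally have "p x j \<le> 3 * real n / \<mu>" using mu_pos by (simp add: field_simps)
  then have "(ax x j - 1) / \<mu> \<le> ln (3 * real n / \<mu>)"
    unfolding pvec_def using mu_pos n_pos by (simp add: ln_ge_iff)
  then have "ax x j - 1 \<le> \<mu> * ln (3 * real n / \<mu>)"
    using mu_pos by (simp add: divide_le_eq mult.commute)
  then show ?thesis using mu_ln_le by linarith
qed

lemma total_le_of_Amul_le_two:
  assumes "\<And>i. i < n \<Longrightarrow> 0 \<le> x i" "\<And>j. j < m \<Longrightarrow> ax x j \<le> 2"
  shows "total x \<le> 2 * real n"
proof -
  have "x i \<le> 2" if "i < n" for i
    using coord_le_Amul[OF assms(1) that] assms(2) by force
  then show ?thesis unfolding total_def using sum_mono[of "{..<n}" x "\<lambda>_. 2"] by simp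
qed

lemma Amul_alg1_step_le_two:
  assumes "invariant x" "j < m"
  shows "ax (alg1_step A m n eps t x) j \<le> 2"
proof -
  have "alg1_step A m n eps t x i \<le> exp \<alpha> * x i" if "i < n" for i
  proof -
    have "- \<alpha> * eta t x i \<le> \<alpha>"
      using eta_facts(1)[OF that, of t x] alpha_pos mult_left_mono[of "- eta t x i" 1 \<alpha>] by simp
    then show ?thesis
      unfolding alg1_step_def using invariant_nonneg[OF assms(1) that]
      by (simp add: mult.commute mult_left_mono)
  qed
  then have "ax (alg1_step A m n eps t x) j \<le> (\<Sum>i<n. A j i * (exp \<alpha> * x i))"
    unfolding Amul_def using A_nonneg[OF assms(2)] by (intro sum_mono mult_left_mono) auto
  also have "\<dots> = exp \<alpha> * ax x j" unfolding Amul_def by (simp add: sum_distrib_left mult_ac)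
  also have "\<dots> \<le> (1 + 2 * \<alpha>) * (1 + 2 * eps)"
    using real_exp_bound_lemma[of \<alpha>] alpha_pos alpha_le eps_le assms
      Amul_nonneg[OF invariant_nonneg[OF assms(1)]]
    by (intro mult_mono) (auto simp: invariant_def)
  also have "\<dots> \<le> (1 + 1/3600) * (1 + 1/15)"
    using alpha_le alpha_pos eps_le eps_pos by (intro mult_mono) auto
  finally show ?thesis by simp
qed

lemma invariant_alg1_step:
  assumes "invariant x"
  shows "invariant (alg1_step A m n eps t x)"
proof -
  let ?x' = "alg1_step A m n eps t x"
  have "f ?x' \<le> f x - \<alpha> / 10 * gain x t"
    by (rule f_alg1_step_le[of x, OF invariant_nonneg[OF assms] invariant_Amul_le_two[OF assms]])
  moreover have "0 \<le> \<alpha> / 10 * gain x t"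
    using alpha_pos gain_nonneg invariant_nonneg[OF assms] by simp
  ultimately have f': "f ?x' \<le> eps" using assms unfolding invariant_def by linarith
  have pos': "0 < ?x' i" if "i < n" for i
    unfolding alg1_step_def using assms that by (simp add: invariant_def)
  then have "total ?x' \<le> 2 * real n"
    using Amul_alg1_step_le_two[OF assms] by (intro total_le_of_Amul_le_two) (auto intro: less_imp_le)
  then have "\<And>j. j < m \<Longrightarrow> ax ?x' j \<le> 1 + 2 * eps"
    using Amul_le_of_f_le[of ?x'] pos' f' by (auto intro: less_imp_le)
  then show ?thesis unfolding invariant_def using pos' f' by auto
qed

lemma total_alg1_step_le:
  assumes "\<And>i. i < n \<Longrightarrow> 0 \<le> x i"
  shows "total (alg1_step A m n eps t x) \<le>
    total x - \<alpha> * (\<Sum>i<n. x i * eta t x i) + \<alpha>\<^sup>2 * (\<Sum>i<n. x i * (eta t x i)\<^sup>2)"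
proof -
  have "total (alg1_step A m n eps t x) \<le>
      (\<Sum>i<n. x i + (- \<alpha>) * (x i * eta t x i) + \<alpha>\<^sup>2 * (x i * (eta t x i)\<^sup>2))"
    unfolding total_def alg1_step_def
  proof (intro sum_mono)
    fix i assume "i \<in> {..<n}"
    then have "\<bar>- \<alpha> * eta t x i\<bar> \<le> 1"
      using eta_facts(1)[of i t x] alpha_pos alpha_le eps_le by (simp add: abs_mult mult_le_one)
    then have "exp (- \<alpha> * eta t x i) \<le> 1 + - \<alpha> * eta t x i + (- \<alpha> * eta t x i)\<^sup>2"
      by (rule exp_le_one_plus_plus_square)
    from mult_left_mono[OF this, of "x i"]
    show "x i * exp (- \<alpha> * eta t x i) \<le> x i + (- \<alpha>) * (x i * eta t x i) + \<alpha>\<^sup>2 * (x i * (eta t x i)\<^sup>2)"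
      using assms \<open>i \<in> {..<n}\<close> by (simp add: power2_eq_square algebra_simps)
  qed
  also have "\<dots> = total x - \<alpha> * (\<Sum>i<n. x i * eta t x i) + \<alpha>\<^sup>2 * (\<Sum>i<n. x i * (eta t x i)\<^sup>2)"
    unfolding total_def by (simp add: sum.distrib sum_subtractf sum_distrib_left)
  finally show ?thesis .
qed

lemma feasible_sum_le_n:
  assumes "\<forall>i<n. 0 \<le> z i" "\<forall>j<m. (\<Sum>i<n. A j i * z i) \<le> 1"
  shows "(\<Sum>i<n. z i) \<le> real n"
proof -
  have "z i \<le> 1" if "i < n" for i
    using coord_le_Amul[of z i] assms that unfolding Amul_def by force
  then show ?thesis using sum_mono[of "{..<n}" z "\<lambda>_. 1"] by simp
qed

lemma sum_le_OPT:
  assumes "\<forall>i<n. 0 \<le> z i" "\<forall>j<m. (\<Sum>i<n. A j i * z i) \<le> 1"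
  shows "(\<Sum>i<n. z i) \<le> OPT A m n"
  unfolding OPT_def
proof (rule cSup_upper)
  show "bdd_above {\<Sum>i<n. x i |x. (\<forall>i<n. 0 \<le> x i) \<and> (\<forall>j<m. (\<Sum>i<n. A j i * x i) \<le> 1)}"
    using feasible_sum_le_n by (auto simp: bdd_above_def)
qed (use assms in auto)

lemma OPT_ge_one: "1 \<le> OPT A m n"
proof -
  obtain i0 where i0: "i0 < n" "colnorm A m i0 = 1" using colnorm_eq_one by auto
  have "(\<Sum>i<n. of_bool (i = i0)) \<le> OPT A m n"
    using i0 A_le_colnorm[OF _ i0(1)] by (intro sum_le_OPT) (auto simp: if_distrib cong: if_cong)
  then show ?thesis using i0 by simp
qed

definition K :: real where
  "K = (1 + 2 * eps) * OPT A m n"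

lemma OPT_le_K: "OPT A m n \<le> K"
  unfolding K_def using OPT_ge_one eps_pos by simp

lemma K_ge_one: "1 \<le> K"
  using OPT_ge_one OPT_le_K by linarith

lemma total_le_K:
  assumes "invariant x"
  shows "total x \<le> K"
proof -
  have x: "\<And>i. i < n \<Longrightarrow> 0 < x i" and row: "\<And>j. j < m \<Longrightarrow> ax x j \<le> 1 + 2 * eps"
    using assms unfolding invariant_def by auto
  have "(\<Sum>i<n. x i / (1 + 2 * eps)) \<le> OPT A m n"
  proof (rule sum_le_OPT)
    show "\<forall>i<n. 0 \<le> x i / (1 + 2 * eps)" using x eps_pos by (auto intro: less_imp_le)
    show "\<forall>j<m. (\<Sum>i<n. A j i * (x i / (1 + 2 * eps))) \<le> 1"
      using row eps_pos by (auto simp: Amul_def sum_divide_distrib[symmetric] times_divide_eq_right)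
  qed
  then show ?thesis
    unfolding K_def total_def using eps_pos by (simp add: sum_divide_distrib[symmetric] divide_le_eq mult.commute)
qed

lemma total_nonneg: "invariant x \<Longrightarrow> 0 \<le> total x"
  unfolding invariant_def total_def by (auto intro: sum_nonneg less_imp_le)

end

context packing_instance
begin

abbreviation X where "X ts k \<equiv> alg1_iter A m n eps ts k"

definition shift :: "(nat \<Rightarrow> real) \<Rightarrow> nat \<Rightarrow> real" where
  "shift x t = (\<Sum>i<n. x i * eta t x i)"

lemma invariant_X: "invariant (X ts k)"
  by (induction k) (auto simp: invariant_x0 invariant_alg1_step)

lemma X_pos: "i < n \<Longrightarrow> 0 < X ts k i"
  using invariant_X[of ts k] unfolding invariant_def by auto

lemma X_append: "k \<le> length xs \<Longrightarrow> X (xs @ ys) k = X xs k"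
  by (induction k) (auto simp: nth_append)

lemma f_X_le: "f (X ts N) \<le> f (X ts 0) - \<alpha> / 10 * (\<Sum>k<N. gain (X ts k) (ts ! k))"
proof (induction N)
  case (Suc N)
  have "f (X ts (Suc N)) \<le> f (X ts N) - \<alpha> / 10 * gain (X ts N) (ts ! N)"
    using f_alg1_step_le[of "X ts N", OF invariant_nonneg[OF invariant_X] invariant_Amul_le_two[OF invariant_X]]
    by simp
  then show ?case using Suc by (simp add: algebra_simps)
qed simp

lemma f_ge_minus_K: "invariant x \<Longrightarrow> - K \<le> f x"
  using total_le_K mu_pos p_pos sum_nonneg[of "{..<m}" "p x"]
  unfolding f_def by (smt (verit) less_imp_le mult_nonneg_nonneg)

lemma sum_gain_le: "(\<Sum>k<N. gain (X ts k) (ts ! k)) \<le> 10 / \<alpha> * (eps + K)"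
proof -
  have "\<alpha> / 10 * (\<Sum>k<N. gain (X ts k) (ts ! k)) \<le> eps + K"
    using f_X_le[of ts N] f_ge_minus_K[OF invariant_X[of ts N]] invariant_X[of ts 0]
    unfolding invariant_def by linarith
  then show ?thesis using alpha_pos by (simp add: field_simps)
qed

lemma total_x0_le_one: "total (x0 A m n eps) \<le> 1"
proof -
  have "total (x0 A m n eps) \<le> (\<Sum>i<n. 1 / real n)"
    unfolding total_def x0_def
  proof (intro sum_mono)
    fix i assume "i \<in> {..<n}"
    then show "(1 - eps / 2) / (real n * colnorm A m i) \<le> 1 / real n"
      using colnorm_ge_one[of i] n_pos eps_pos frac_le[of 1 "1 - eps / 2" "real n" "real n * colnorm A m i"]
      by (simp add: mult_le_cancel_left1)
  qed
  then show ?thesis using n_pos by simp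
qed

lemma sum_shift_le: "(\<Sum>k<N. shift (X ts k) (ts ! k)) \<le> 1 / \<alpha> + \<alpha> * real N * K"
proof -
  have second_order: "(\<Sum>i<n. X ts k i * (eta t (X ts k) i)\<^sup>2) \<le> K" for k t
  proof -
    have "(\<Sum>i<n. X ts k i * (eta t (X ts k) i)\<^sup>2) \<le> (\<Sum>i<n. X ts k i)"
    proof (intro sum_mono)
      fix i assume "i \<in> {..<n}"
      then have "(eta t (X ts k) i)\<^sup>2 \<le> 1" "0 < X ts k i"
        using eta_facts(1)[of i t "X ts k"] X_pos by (auto simp: abs_square_le_1)
      then show "X ts k i * (eta t (X ts k) i)\<^sup>2 \<le> X ts k i" by (simp add: mult_left_le)
    qed
    also have "\<dots> \<le> K" using total_le_K[OF invariant_X] unfolding total_def .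
    finally show ?thesis .
  qed
  have "total (X ts N) \<le> total (X ts 0) - \<alpha> * (\<Sum>k<N. shift (X ts k) (ts ! k)) + \<alpha>\<^sup>2 * (real N * K)"
  proof (induction N)
    case (Suc N)
    have "total (X ts (Suc N)) \<le>
        total (X ts N) - \<alpha> * shift (X ts N) (ts ! N) + \<alpha>\<^sup>2 * (\<Sum>i<n. X ts N i * (eta (ts ! N) (X ts N) i)\<^sup>2)"
      unfolding shift_def using total_alg1_step_le[of "X ts N", OF invariant_nonneg[OF invariant_X]] by simp
    also have "\<dots> \<le> total (X ts N) - \<alpha> * shift (X ts N) (ts ! N) + \<alpha>\<^sup>2 * K"
      using second_order by (intro add_left_mono mult_left_mono) auto
    finally show ?case using Suc by (simp add: algebra_simps)
  qed simp
  then have "\<alpha> * (\<Sum>k<N. shift (X ts k) (ts ! k)) \<le> 1 + \<alpha>\<^sup>2 * (real N * K)"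
    using total_x0_le_one total_nonneg[OF invariant_X[of ts N]] by simp
  then show ?thesis using alpha_pos by (simp add: field_simps power2_eq_square)
qed

end

section \<open>Three unlikely events\<close>

context packing_instance
begin

definition path_sum :: "((nat \<Rightarrow> real) \<Rightarrow> nat \<Rightarrow> real) \<Rightarrow> nat list \<Rightarrow> real" where
  "path_sum h ts = (\<Sum>k<length ts. h (X ts k) (ts ! k))"

lemma path_sum_snoc: "path_sum h (pre @ [t]) = path_sum h pre + h (X pre (length pre)) t"
proof -
  have "(\<Sum>k<length pre. h (X (pre @ [t]) k) ((pre @ [t]) ! k)) = path_sum h pre"
    unfolding path_sum_def by (intro sum.cong refl) (simp add: X_append nth_append)
  then show ?thesis unfolding path_sum_def by (simp add: X_append)
qed

lemma sum_choice_lists_path_sum_le: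
  assumes "\<And>x. (\<Sum>t<w. h x t) \<le> 0"
  shows "(\<Sum>ts\<in>choice_lists w N. path_sum h ts) \<le> 0"
proof -
  have "(\<Sum>ts\<in>choice_lists w N. path_sum h ts) \<le> real w ^ N * path_sum h []"
    using assms[of "X _ (length _)"]
    by (intro sum_choice_lists_supermartingale) (simp add: path_sum_snoc sum.distrib)
  then show ?thesis by (simp add: path_sum_def)
qed

definition full_gain :: "(nat \<Rightarrow> real) \<Rightarrow> real" where
  "full_gain x = (\<Sum>i<n. x i * (xi x i * g x i))"

definition full_shift :: "(nat \<Rightarrow> real) \<Rightarrow> real" where
  "full_shift x = (\<Sum>i<n. x i * xi x i)"

lemma sum_gain: "(\<Sum>t<w. gain x t) = full_gain x"
proof -
  have "(\<Sum>t<w. gain x t) = (\<Sum>i<n. \<Sum>t<w. x i * (eta t x i * g x i))"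
    unfolding gain_def by (rule sum.swap)
  also have "\<dots> = full_gain x"
    unfolding full_gain_def using sum_eta[of _ "\<lambda>v. x _ * (v * g x _)" x] by simp
  finally show ?thesis .
qed

lemma sum_shift: "(\<Sum>t<w. shift x t) = full_shift x"
proof -
  have "(\<Sum>t<w. shift x t) = (\<Sum>i<n. \<Sum>t<w. x i * eta t x i)"
    unfolding shift_def by (rule sum.swap)
  also have "\<dots> = full_shift x"
    unfolding full_shift_def using sum_eta[of _ "\<lambda>v. x _ * v" x] by simp
  finally show ?thesis .
qed

lemma full_gain_nonneg: "invariant x \<Longrightarrow> 0 \<le> full_gain x"
  unfolding full_gain_def
proof (intro sum_nonneg)
  fix i assume inv: "invariant x" and "i \<in> {..<n}"
  then have i: "i < n" by simp
  have "0 \<le> (xi x i)\<^sup>2" by simp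
  then have "0 \<le> xi x i * g x i" using xi_facts(2)[OF i, of x] by linarith
  then show "0 \<le> x i * (xi x i * g x i)" using invariant_nonneg[OF inv i] by simp
qed

definition large_gain :: "nat list set" where
  "large_gain = {ts \<in> choice_lists w T. 200 * (real w / \<alpha>) * (eps + K) \<le> (\<Sum>k<T. full_gain (X ts k))}"

text \<open>Each bucket step realises in expectation a 1/w fraction of the full clipped gain, and
the realised gains are summable by the potential argument; Markov's inequality finishes.\<close>

lemma card_large_gain: "real (card large_gain) \<le> real (w ^ T) / 20"
proof -
  define c where "c = 10 * (real w / \<alpha>) * (eps + K)"
  have c_pos: "0 < c" unfolding c_def using w_ge_5 alpha_pos eps_pos K_ge_one by simp
  have "(\<Sum>ts\<in>choice_lists w T. path_sum (\<lambda>x t. full_gain x - real w * gain x t) ts) \<le> 0"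
    by (rule sum_choice_lists_path_sum_le) (simp add: sum_subtractf sum_distrib_left[symmetric] sum_gain)
  moreover have "path_sum (\<lambda>x t. full_gain x - real w * gain x t) ts =
      (\<Sum>k<T. full_gain (X ts k)) - real w * (\<Sum>k<T. gain (X ts k) (ts ! k))"
    if "ts \<in> choice_lists w T" for ts
    using that unfolding path_sum_def choice_lists_def by (simp add: sum_subtractf sum_distrib_left)
  ultimately have "(\<Sum>ts\<in>choice_lists w T. \<Sum>k<T. full_gain (X ts k)) \<le>
      (\<Sum>ts\<in>choice_lists w T. real w * (\<Sum>k<T. gain (X ts k) (ts ! k)))"
    by (simp add: sum_subtractf)
  also have "\<dots> \<le> (\<Sum>ts\<in>choice_lists w T. real w * (10 / \<alpha> * (eps + K)))"
    using sum_gain_le by (intro sum_mono mult_left_mono) auto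
  also have "\<dots> = real (w ^ T) * c" by (simp add: card_choice_lists c_def)
  finally have expectation: "(\<Sum>ts\<in>choice_lists w T. \<Sum>k<T. full_gain (X ts k)) \<le> real (w ^ T) * c" .
  have "real (card large_gain) * (20 * c) \<le> (\<Sum>ts\<in>choice_lists w T. \<Sum>k<T. full_gain (X ts k))"
    by (rule card_times_le_sum[OF finite_choice_lists])
      (auto simp: large_gain_def c_def intro!: sum_nonneg full_gain_nonneg invariant_X)
  then have "(20 * real (card large_gain)) * c \<le> real (w ^ T) * c" using expectation by (simp add: mult_ac)
  then show ?thesis using c_pos by (simp add: mult_right_le_imp_le)
qed

definition shift_deviation :: "(nat \<Rightarrow> real) \<Rightarrow> nat \<Rightarrow> real" where
  "shift_deviation x t = full_shift x - real w * shift x t"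

lemma abs_weighted_total_le:
  assumes "invariant x" "\<And>i. i < n \<Longrightarrow> \<bar>c i\<bar> \<le> 1"
  shows "\<bar>\<Sum>i<n. x i * c i\<bar> \<le> K"
proof -
  have "\<bar>\<Sum>i<n. x i * c i\<bar> \<le> (\<Sum>i<n. x i)"
  proof (rule order.trans[OF sum_abs sum_mono])
    fix i assume "i \<in> {..<n}"
    then show "\<bar>x i * c i\<bar> \<le> x i"
      using invariant_nonneg[OF assms(1)] assms(2) by (simp add: abs_mult mult_left_le)
  qed
  then show ?thesis using total_le_K[OF assms(1)] unfolding total_def by simp
qed

lemma abs_shift_deviation_le:
  assumes "invariant x"
  shows "\<bar>shift_deviation x t\<bar> \<le> (1 + real w) * K"
proof -
  have "\<bar>full_shift x\<bar> \<le> K" "\<bar>shift x t\<bar> \<le> K"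
    unfolding full_shift_def shift_def using assms xi_facts(1) eta_facts(1)
    by (auto intro!: abs_weighted_total_le)
  then have "\<bar>real w * shift x t\<bar> \<le> real w * K" by (simp add: abs_mult mult_left_mono)
  with \<open>\<bar>full_shift x\<bar> \<le> K\<close> show ?thesis unfolding shift_deviation_def by (simp add: algebra_simps)
qed

definition large_shift :: "nat list set" where
  "large_shift = {ts \<in> choice_lists w T. 5 * eps * real T * K \<le> path_sum shift_deviation ts}"

lemma exp_14_ge: "1000 \<le> exp (14::real)"
proof -
  have "3 ^ 7 \<le> exp (2::real) ^ 7"
    using exp_ge_add_one_self[of "2::real"] by (intro power_mono) auto
  also have "\<dots> = exp 14" using exp_of_nat_mult[of 7 "2::real"] by simp
  finally show ?thesis by simp
qed

lemma T_shift_exponent_ge: "14 \<le> (5 * eps / (2 * (1 + real w)))\<^sup>2 * real T"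
proof -
  have "6 * (real w)\<^sup>2 \<le> eps\<^sup>2 * real T"
  proof -
    have "2 * (real w)\<^sup>2 * 3 \<le> 2 * (real w)\<^sup>2 * ln (real n / eps)"
      using ln_inv_eps_ge_3 ln_inv_eps_le_ln_n_div_eps by (intro mult_left_mono) auto
    also have "\<dots> \<le> real T * eps\<^sup>2" using T_ge(2) eps_pos by (simp add: divide_le_eq)
    finally show ?thesis by (simp add: mult_ac)
  qed
  moreover have "(1 + real w)\<^sup>2 \<le> (6/5 * real w)\<^sup>2" using w_ge_5 by (intro power_mono) auto
  moreover have "(6/5 * real w)\<^sup>2 = 36/25 * (real w)\<^sup>2" by (simp add: power2_eq_square)
  ultimately have "56 * (1 + real w)\<^sup>2 \<le> 25 * (eps\<^sup>2 * real T)"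
    using zero_le_power2[of "real w"] by linarith
  then have "14 \<le> 25 * (eps\<^sup>2 * real T) / (4 * (1 + real w)\<^sup>2)"
    by (simp add: le_divide_eq)
  also have "\<dots> = (5 * eps / (2 * (1 + real w)))\<^sup>2 * real T"
    by (simp add: power_divide power2_eq_square field_simps)
  finally show ?thesis .
qed

definition shift_scale :: real where
  "shift_scale = (1 + real w) * K"

definition shift_rate :: real where
  "shift_rate = 5 * eps / (2 * (1 + real w))"

text \<open>Exponential supermartingale with exponent shift_rate / shift_scale per unit of deviation:
shift_scale bounds a single deviation step, and the second-order term shift_rate^2 per step is
compensated explicitly.\<close>

definition shift_weight :: "nat list \<Rightarrow> real" where
  "shift_weight ts = exp (shift_rate / shift_scale * path_sum shift_deviation ts
    - real (length ts) * shift_rate\<^sup>2)"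

lemma shift_scale_pos: "0 < shift_scale"
  unfolding shift_scale_def using K_ge_one by simp

lemma shift_rate_bounds: "0 \<le> shift_rate" "shift_rate \<le> 1"
  unfolding shift_rate_def using eps_pos eps_le by (auto simp: field_simps)

lemma sum_exp_shift_deviation_le:
  assumes "invariant x"
  shows "(\<Sum>t<w. exp (shift_rate / shift_scale * shift_deviation x t)) \<le> real w * exp (shift_rate\<^sup>2)"
proof -
  let ?r = shift_rate and ?R = shift_scale
  have "exp (?r / ?R * shift_deviation x t) \<le> 1 + ?r / ?R * shift_deviation x t + ?r\<^sup>2" for t
  proof -
    have "\<bar>?r / ?R * shift_deviation x t\<bar> = ?r / ?R * \<bar>shift_deviation x t\<bar>"
      using shift_rate_bounds shift_scale_pos by (simp add: abs_mult)
    also have "\<dots> \<le> ?r / ?R * ?R"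
      using abs_shift_deviation_le[OF assms, of t] shift_rate_bounds shift_scale_pos
      unfolding shift_scale_def by (intro mult_left_mono) auto
    also have "\<dots> = ?r" using shift_scale_pos by simp
    finally have small: "\<bar>?r / ?R * shift_deviation x t\<bar> \<le> ?r" .
    then have "(?r / ?R * shift_deviation x t)\<^sup>2 \<le> ?r\<^sup>2"
      using power_mono[OF small abs_ge_zero, of 2] by (metis power2_abs)
    then show ?thesis
      using exp_le_one_plus_plus_square[of "?r / ?R * shift_deviation x t"] small shift_rate_bounds
      by linarith
  qed
  then have "(\<Sum>t<w. exp (?r / ?R * shift_deviation x t)) \<le> (\<Sum>t<w. 1 + ?r / ?R * shift_deviation x t + ?r\<^sup>2)"
    by (intro sum_mono) auto
  also have "\<dots> = real w * (1 + ?r\<^sup>2)"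
  proof -
    have "(\<Sum>t<w. shift_deviation x t) = 0"
      unfolding shift_deviation_def by (simp add: sum_subtractf sum_distrib_left[symmetric] sum_shift)
    then show ?thesis
      by (simp add: sum.distrib sum_distrib_left[symmetric] sum_divide_distrib[symmetric] algebra_simps)
  qed
  also have "\<dots> \<le> real w * exp (?r\<^sup>2)" by (intro mult_left_mono) auto
  finally show ?thesis .
qed

lemma sum_shift_weight_le: "(\<Sum>ts\<in>choice_lists w T. shift_weight ts) \<le> real (w ^ T)"
proof -
  have "(\<Sum>ts\<in>choice_lists w T. shift_weight ts) \<le> real w ^ T * shift_weight []"
  proof (rule sum_choice_lists_supermartingale)
    fix k pre
    let ?E = "\<lambda>t. exp (shift_rate / shift_scale * shift_deviation (X pre (length pre)) t)"
    have "shift_weight (pre @ [t]) = shift_weight pre * exp (- shift_rate\<^sup>2) * ?E t" for t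
      unfolding shift_weight_def path_sum_snoc by (simp add: exp_add[symmetric] algebra_simps)
    then have "(\<Sum>t<w. shift_weight (pre @ [t])) = shift_weight pre * exp (- shift_rate\<^sup>2) * (\<Sum>t<w. ?E t)"
      by (simp add: sum_distrib_left)
    also have "\<dots> \<le> shift_weight pre * exp (- shift_rate\<^sup>2) * (real w * exp (shift_rate\<^sup>2))"
      using sum_exp_shift_deviation_le[OF invariant_X] by (intro mult_left_mono) (auto simp: shift_weight_def)
    finally show "(\<Sum>t<w. shift_weight (pre @ [t])) \<le> real w * shift_weight pre"
      by (simp add: exp_minus field_simps)
  qed
  then show ?thesis by (simp add: shift_weight_def path_sum_def)
qed

lemma shift_weight_ge_of_large_shift:
  assumes "ts \<in> large_shift"
  shows "1000 \<le> shift_weight ts"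
proof -
  let ?r = shift_rate and ?R = shift_scale
  have len: "length ts = T" and large: "5 * eps * real T * K \<le> path_sum shift_deviation ts"
    using assms by (auto simp: large_shift_def choice_lists_def)
  have w: "1 + real w \<noteq> 0" by (simp add: add_pos_nonneg)
  have KR: "K / ?R = 1 / (1 + real w)" unfolding shift_scale_def using K_ge_one by simp
  have r5: "5 * eps = 2 * ?r * (1 + real w)" unfolding shift_rate_def using w by (simp add: field_simps)
  have "?r / ?R * (5 * eps * real T * K) = ?r * (5 * eps) * real T * (K / ?R)" by (simp add: mult.assoc)
  also have "\<dots> = ?r * (2 * ?r * (1 + real w)) * real T * (1 / (1 + real w))" by (simp only: KR r5)
  also have "\<dots> = 2 * ?r\<^sup>2 * real T" using w by (simp add: field_simps power2_eq_square)
  finally have "?r\<^sup>2 * real T \<le> ?r / ?R * path_sum shift_deviation ts - real (length ts) * ?r\<^sup>2"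
    using mult_left_mono[OF large, of "?r / ?R"] shift_rate_bounds shift_scale_pos len
    by (simp add: mult_ac)
  then have "14 \<le> ?r / ?R * path_sum shift_deviation ts - real (length ts) * ?r\<^sup>2"
    using T_shift_exponent_ge unfolding shift_rate_def by linarith
  then have "exp 14 \<le> shift_weight ts" unfolding shift_weight_def by simp
  then show ?thesis using exp_14_ge by linarith
qed

lemma card_large_shift: "real (card large_shift) \<le> real (w ^ T) / 1000"
proof -
  have "real (card large_shift) * 1000 \<le> (\<Sum>ts\<in>choice_lists w T. shift_weight ts)"
    using shift_weight_ge_of_large_shift
    by (intro card_times_le_sum[OF finite_choice_lists]) (auto simp: shift_weight_def large_shift_def)
  then show ?thesis using sum_shift_weight_le by simp
qed

lemma lam_ybar:
  assumes "i < n"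
  shows "lam A m eps (ybar A m n eps ts) i = (\<Sum>k<T. g (X ts k) i) / real T + eps"
proof -
  have "(\<Sum>j<m. A j i * ybar A m n eps ts j) = (\<Sum>k<T. \<Sum>j<m. A j i * p (X ts k) j) / real T"
    unfolding ybar_def by (simp add: sum_divide_distrib sum_distrib_left sum.swap[of _ "{..<m}"])
  also have "\<dots> = (\<Sum>k<T. g (X ts k) i) / real T + 1"
    using T_pos by (simp add: grad_plus_one[symmetric] sum.distrib add_divide_distrib)
  finally show ?thesis unfolding lam_def by simp
qed

definition undercovered :: "nat \<Rightarrow> nat list set" where
  "undercovered i = {ts \<in> choice_lists w T. lam A m eps (ybar A m n eps ts) i \<le> -2 * eps}"

lemma sum_xi_le_of_undercovered:
  assumes "i < n" "ts \<in> undercovered i"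
  shows "(\<Sum>k<T. xi (X ts k) i) \<le> -2 * eps * real T"
proof -
  have "(\<Sum>k<T. g (X ts k) i) / real T \<le> -3 * eps"
    using assms lam_ybar[OF assms(1), of ts] unfolding undercovered_def by simp
  then have "(\<Sum>k<T. g (X ts k) i) \<le> -3 * eps * real T" using T_pos by (simp add: divide_le_eq)
  moreover have "(\<Sum>k<T. xi (X ts k) i) \<le> (\<Sum>k<T. g (X ts k) i + eps)"
    using xi_facts(3)[OF assms(1)] by (intro sum_mono) auto
  ultimately show ?thesis by (simp add: sum.distrib algebra_simps)
qed

lemma X_le_two_div_colnorm:
  assumes "i < n"
  shows "X ts k i \<le> 2 / colnorm A m i"
proof -
  obtain j where j: "j < m" "A j i = colnorm A m i" using colnorm_attained[OF assms] by auto
  have "A j i * X ts k i \<le> ax (X ts k) j"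
    unfolding Amul_def using assms
    by (intro member_le_sum[of i "{..<n}" "\<lambda>i. A j i * X ts k i"])
      (auto intro!: mult_nonneg_nonneg A_nonneg[OF j(1)] less_imp_le[OF X_pos])
  also have "\<dots> \<le> 2" using invariant_Amul_le_two[OF invariant_X j(1)] .
  finally show ?thesis using j colnorm_ge_one[OF assms] by (simp add: field_simps)
qed

definition coord_drift :: "nat \<Rightarrow> (nat \<Rightarrow> real) \<Rightarrow> nat \<Rightarrow> real" where
  "coord_drift i x t = exp (\<alpha> * xi x i) - 1"

definition coord_weight :: "nat \<Rightarrow> nat list \<Rightarrow> real" where
  "coord_weight i ts = exp (- path_sum (coord_drift i) ts / real w) / X ts (length ts) i"

text \<open>A coordinate shrinks by exp(-\<alpha> \<eta>) per step, and the average of exp(\<alpha> \<eta>) over the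
buckets is 1 + (exp(\<alpha> \<xi>) - 1) / w; the compensator in coord_weight makes it a supermartingale.\<close>

lemma sum_coord_weight_le:
  assumes i: "i < n"
  shows "(\<Sum>ts\<in>choice_lists w T. coord_weight i ts) \<le> real (w ^ T) * coord_weight i []"
proof -
  have "(\<Sum>ts\<in>choice_lists w T. coord_weight i ts) \<le> real w ^ T * coord_weight i []"
  proof (rule sum_choice_lists_supermartingale)
    fix k pre
    define x where "x = X pre (length pre)"
    define q where "q = exp (\<alpha> * xi x i) - 1"
    have w_pos: "0 < real w" using w_ge_5 by simp
    have weight_snoc:
      "coord_weight i (pre @ [t]) = coord_weight i pre * exp (- q / real w) * exp (\<alpha> * eta t x i)" for t
    proof -
      have X': "X (pre @ [t]) (length (pre @ [t])) i = x i * exp (- \<alpha> * eta t x i)"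
        by (simp add: X_append x_def alg1_step_def)
      have E': "exp (- path_sum (coord_drift i) (pre @ [t]) / real w) =
          exp (- path_sum (coord_drift i) pre / real w) * exp (- q / real w)"
        by (simp add: path_sum_snoc coord_drift_def x_def q_def diff_divide_distrib exp_add[symmetric])
      show ?thesis
        unfolding coord_weight_def X' E' x_def[symmetric] by (simp add: exp_minus field_simps)
    qed
    have "(\<Sum>t<w. exp (\<alpha> * eta t x i)) = real w + q"
      using sum_eta[OF i, of "\<lambda>v. exp (\<alpha> * v) - 1" x] unfolding q_def by (simp add: sum_subtractf)
    also have "\<dots> \<le> real w * exp (q / real w)"
      using exp_ge_add_one_self[of "q / real w"] w_pos mult_left_mono[of "1 + q / real w" _ "real w"]
      by (simp add: distrib_left)
    finally have "(\<Sum>t<w. coord_weight i (pre @ [t])) \<le>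
        coord_weight i pre * exp (- q / real w) * (real w * exp (q / real w))"
      unfolding weight_snoc sum_distrib_left[symmetric]
      using X_pos[OF i] by (intro mult_left_mono) (auto simp: coord_weight_def intro!: divide_nonneg_pos)
    also have "\<dots> = real w * coord_weight i pre" by (simp add: exp_minus field_simps)
    finally show "(\<Sum>t<w. coord_weight i (pre @ [t])) \<le> real w * coord_weight i pre" .
  qed
  then show ?thesis by simp
qed

lemma exponent_ge_of_undercovered:
  assumes i: "i < n" and ts: "ts \<in> undercovered i"
  shows "11 * ln (2 * real n) \<le> - path_sum (coord_drift i) ts / real w"
proof -
  have len: "length ts = T" using ts unfolding undercovered_def choice_lists_def by simp
  have \<alpha>: "0 < \<alpha>" "\<alpha> \<le> eps / 240" using alpha_pos alpha_le by auto
  have "path_sum (coord_drift i) ts \<le> (\<Sum>k<T. \<alpha> * xi (X ts k) i + \<alpha>\<^sup>2)"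
    unfolding path_sum_def coord_drift_def len
  proof (intro sum_mono)
    fix k
    have small: "\<bar>\<alpha> * xi (X ts k) i\<bar> \<le> \<alpha>"
      using xi_facts(1)[OF i] \<alpha> by (simp add: abs_mult mult_left_le)
    then have "(\<alpha> * xi (X ts k) i)\<^sup>2 \<le> \<alpha>\<^sup>2" using power_mono[OF small abs_ge_zero, of 2] by simp
    then show "exp (\<alpha> * xi (X ts k) i) - 1 \<le> \<alpha> * xi (X ts k) i + \<alpha>\<^sup>2"
      using exp_le_one_plus_plus_square[of "\<alpha> * xi (X ts k) i"] small \<alpha> eps_le by linarith
  qed
  also have "\<dots> \<le> \<alpha> * (-2 * eps * real T) + \<alpha>\<^sup>2 * real T"
    using mult_left_mono[OF sum_xi_le_of_undercovered[OF i ts], of \<alpha>] \<alpha>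
    by (simp add: sum.distrib sum_distrib_left[symmetric])
  finally have "\<alpha> * real T * (2 * eps - \<alpha>) \<le> - path_sum (coord_drift i) ts"
    by (simp add: power2_eq_square algebra_simps)
  moreover have "11 * ln (2 * real n) * real w \<le> \<alpha> * real T * (2 * eps - \<alpha>)"
  proof -
    have "6 * real w * ln (2 * real n) \<le> real T * (\<alpha> * eps)"
      using T_ge(1) \<alpha> eps_pos by (simp add: divide_le_eq)
    moreover have "11 * eps \<le> 6 * (2 * eps - \<alpha>)" using \<alpha> by simp
    ultimately have "11 * eps * (real w * ln (2 * real n)) \<le> 6 * (2 * eps - \<alpha>) * (real w * ln (2 * real n))
        \<and> 6 * real w * ln (2 * real n) * (2 * eps - \<alpha>) \<le> real T * (\<alpha> * eps) * (2 * eps - \<alpha>)"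
      using ln_two_n_ge \<alpha> eps_pos by (intro conjI mult_right_mono) auto
    then have "eps * (11 * ln (2 * real n) * real w) \<le> eps * (\<alpha> * real T * (2 * eps - \<alpha>))"
      by (simp add: algebra_simps)
    then show ?thesis using eps_pos by simp
  qed
  ultimately have "11 * ln (2 * real n) * real w \<le> - path_sum (coord_drift i) ts" by linarith
  then show ?thesis using w_ge_5 by (subst pos_le_divide_eq) auto
qed

lemma coord_weight_ge_of_undercovered:
  assumes i: "i < n" and ts: "ts \<in> undercovered i"
  shows "colnorm A m i / 2 * (2 * real n) ^ 11 \<le> coord_weight i ts"
proof -
  have "(2 * real n) ^ 11 = exp (11 * ln (2 * real n))"
    using exp_of_nat_mult[of 11 "ln (2 * real n)"] n_pos by simp
  also have "\<dots> \<le> exp (- path_sum (coord_drift i) ts / real w)"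
    using exponent_ge_of_undercovered[OF i ts] by simp
  finally have "colnorm A m i / 2 * (2 * real n) ^ 11 \<le>
      colnorm A m i / 2 * exp (- path_sum (coord_drift i) ts / real w)"
    using colnorm_ge_one[OF i] by (intro mult_left_mono) auto
  also have "\<dots> \<le> coord_weight i ts"
    unfolding coord_weight_def
    using X_le_two_div_colnorm[OF i, of ts "length ts"] X_pos[OF i, of ts "length ts"] colnorm_ge_one[OF i]
    by (simp add: field_simps)
  finally show ?thesis .
qed

lemma card_undercovered:
  assumes i: "i < n"
  shows "real (card (undercovered i)) \<le> real (w ^ T) * (4 * real n / (2 * real n) ^ 11)"
proof -
  define c where "c = colnorm A m i"
  have c: "1 \<le> c" unfolding c_def by (rule colnorm_ge_one[OF i])
  have "real (card (undercovered i)) * (c / 2 * (2 * real n) ^ 11) \<le>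
      (\<Sum>ts\<in>choice_lists w T. coord_weight i ts)"
    unfolding c_def using X_pos[OF i] coord_weight_ge_of_undercovered[OF i]
    by (intro card_times_le_sum[OF finite_choice_lists])
      (auto simp: undercovered_def coord_weight_def less_imp_le)
  also have "\<dots> \<le> real (w ^ T) * coord_weight i []" by (rule sum_coord_weight_le[OF i])
  also have "coord_weight i [] = real n * c / (1 - eps / 2)"
    unfolding coord_weight_def path_sum_def c_def using eps_le by (simp add: x0_def)
  also have "real (w ^ T) * (real n * c / (1 - eps / 2)) \<le> real (w ^ T) * (2 * real n * c)"
    using eps_le n_pos c by (intro mult_left_mono) (auto simp: field_simps)
  also have "\<dots> = real (w ^ T) * (4 * real n / (2 * real n) ^ 11) * (c / 2 * (2 * real n) ^ 11)"
    using n_pos by (simp add: field_simps)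
  finally show ?thesis by (rule mult_right_le_imp_le) (use c n_pos in simp)
qed

lemma card_undercovered_some: "real (card (\<Union>i<n. undercovered i)) \<le> real (w ^ T) / 512"
proof -
  have "real (card (\<Union>i<n. undercovered i)) \<le> (\<Sum>i<n. real (card (undercovered i)))"
    using card_UN_le[of "{..<n}" undercovered] by (simp flip: of_nat_sum)
  also have "\<dots> \<le> real n * (real (w ^ T) * (4 * real n / (2 * real n) ^ 11))"
    using sum_mono[of "{..<n}", OF card_undercovered] by simp
  also have "\<dots> = real (w ^ T) / (2 * real n) ^ 9"
  proof -
    define Z where "Z = (2 * real n) ^ 9"
    have "(2 * real n) ^ 11 = (2 * real n)\<^sup>2 * Z" unfolding Z_def by (simp flip: power_add)
    moreover have "0 < Z" unfolding Z_def using n_pos by simp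
    ultimately show ?thesis unfolding Z_def[symmetric] using n_pos by (simp add: field_simps power2_eq_square)
  qed
  also have "\<dots> \<le> real (w ^ T) / 2 ^ 9"
    using n_pos by (intro divide_left_mono power_mono) auto
  finally show ?thesis by simp
qed

end

section \<open>The covering solution\<close>

context packing_instance
begin

text \<open>Approximate complementary slackness: a row with (A x)_j < 1 - eps carries an exponentially
small penalty, so the penalty vector p(x) is nearly certified by the primal iterate.\<close>

lemma sum_p_le:
  assumes "invariant x"
  shows "(1 - eps) * (\<Sum>j<m. p x j) \<le> (1 + eps) * total x + full_shift x + full_gain x + eps"
proof -
  have x: "\<And>i. i < n \<Longrightarrow> 0 \<le> x i" using invariant_nonneg[OF assms] .
  have row: "(1 - eps) * p x j - exp (- eps / \<mu>) \<le> p x j * ax x j" if "j < m" for j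
  proof (cases "1 - eps \<le> ax x j")
    case True
    have "(1 - eps) * p x j \<le> p x j * ax x j"
      using mult_right_mono[OF True less_imp_le[OF p_pos[of x j]]] by (simp add: mult.commute)
    then show ?thesis using exp_ge_zero[of "- eps / \<mu>"] by linarith
  next
    case False
    then have "(ax x j - 1) / \<mu> \<le> - eps / \<mu>" using mu_pos by (intro divide_right_mono) auto
    then have "p x j \<le> exp (- eps / \<mu>)" unfolding pvec_def by simp
    moreover have "0 \<le> p x j * ax x j" using Amul_nonneg[OF x that] p_pos[of x j] by simp
    moreover have "0 \<le> eps * p x j" using eps_pos p_pos[of x j] by simp
    ultimately show ?thesis by (simp add: algebra_simps)
  qed
  have "(1 - eps) * (\<Sum>j<m. p x j) - real m * exp (- eps / \<mu>) \<le> (\<Sum>j<m. p x j * ax x j)"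
    using sum_mono[of "{..<m}", OF row] by (simp add: sum_subtractf sum_distrib_left)
  moreover have "real m * exp (- eps / \<mu>) \<le> eps" using m_exp_le_eps[of eps] eps_pos by simp
  moreover have "(\<Sum>j<m. p x j * ax x j) = total x + (\<Sum>i<n. x i * g x i)"
    unfolding p_dot_Amul total_def by (simp add: algebra_simps sum.distrib)
  moreover have "(\<Sum>i<n. x i * g x i) \<le> (\<Sum>i<n. x i * xi x i + eps * x i + x i * (xi x i * g x i))"
  proof (intro sum_mono)
    fix i assume "i \<in> {..<n}"
    then have "x i * g x i \<le> x i * (xi x i + eps + xi x i * g x i)"
      using xi_facts(5)[of i x] x by (intro mult_left_mono) auto
    then show "x i * g x i \<le> x i * xi x i + eps * x i + x i * (xi x i * g x i)"
      by (simp add: algebra_simps)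
  qed
  moreover have "(\<Sum>i<n. x i * xi x i + eps * x i + x i * (xi x i * g x i)) =
      full_shift x + eps * total x + full_gain x"
    unfolding full_shift_def total_def full_gain_def by (simp add: sum.distrib sum_distrib_left)
  ultimately show ?thesis by (simp add: algebra_simps)
qed

lemma ybar_nonneg: "0 \<le> ybar A m n eps ts j"
  unfolding ybar_def using p_pos by (intro mult_nonneg_nonneg sum_nonneg) (auto intro: less_imp_le)

context
  fixes pick' :: "nat \<Rightarrow> nat" and y :: "nat \<Rightarrow> real"
  assumes pick': "\<And>i. i < n \<Longrightarrow> pick' i < m \<and> A (pick' i) i = colnorm A m i"
    and y_nonneg: "\<And>j. 0 \<le> y j"
begin

lemma lam_div_nonpos:
  assumes "i < n" "lam A m eps y i \<le> -2 * eps" "pick' i = j"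
  shows "lam A m eps y i / A j i \<le> 0"
proof -
  have "0 < A j i" using assms pick' colnorm_ge_one[OF assms(1)] by force
  then show ?thesis using assms eps_pos by (simp add: divide_nonpos_pos)
qed

lemma alg2_nonneg: "0 \<le> alg2 A m n eps pick' y j"
  unfolding alg2_def using y_nonneg
  by (intro add_nonneg_nonneg sum_nonneg) (auto intro: lam_div_nonpos)

text \<open>Algorithm 2 raises the row of largest entry of every badly covered column exactly enough
to bring its coverage up to 1 - eps; all other columns are already covered to 1 - 3 eps.\<close>

lemma alg2_covers:
  assumes i: "i < n"
  shows "1 - 3 * eps \<le> (\<Sum>j<m. A j i * alg2 A m n eps pick' y j)"
proof -
  define S where "S j = {i. i < n \<and> lam A m eps y i \<le> -2 * eps \<and> pick' i = j}" for j
  define raise where "raise j = (\<Sum>i'\<in>S j. - lam A m eps y i' / A j i')" for j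
  have raise_nonneg: "0 \<le> A j i * raise j" if "j < m" for j
    unfolding raise_def S_def using A_nonneg[OF that i]
    by (intro mult_nonneg_nonneg sum_nonneg) (auto intro: lam_div_nonpos)
  have "(\<Sum>j<m. A j i * alg2 A m n eps pick' y j) = lam A m eps y i + 1 - eps + (\<Sum>j<m. A j i * raise j)"
    unfolding alg2_def raise_def S_def lam_def by (simp add: algebra_simps sum.distrib)
  moreover have "- lam A m eps y i \<le> (\<Sum>j<m. A j i * raise j)" if bad: "lam A m eps y i \<le> -2 * eps"
  proof -
    define j0 where "j0 = pick' i"
    have j0: "j0 < m" "A j0 i = colnorm A m i" using pick'[OF i] unfolding j0_def by auto
    have A_pos: "0 < A j0 i" using j0 colnorm_ge_one[OF i] by simp
    have "- lam A m eps y i / A j0 i \<le> raise j0"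
      unfolding raise_def S_def j0_def using i bad
      by (intro member_le_sum) (auto intro: lam_div_nonpos)
    then have "- lam A m eps y i \<le> A j0 i * raise j0" using A_pos by (simp add: field_simps)
    also have "\<dots> \<le> (\<Sum>j<m. A j i * raise j)"
      using raise_nonneg j0 by (intro member_le_sum[of j0 "{..<m}" "\<lambda>j. A j i * raise j"]) auto
    finally show ?thesis .
  qed
  moreover have "0 \<le> (\<Sum>j<m. A j i * raise j)" using raise_nonneg by (intro sum_nonneg) auto
  ultimately show ?thesis using eps_pos by force
qed

end

lemma cover_output_feasible:
  assumes "\<And>i. i < n \<Longrightarrow> pick' i < m \<and> A (pick' i) i = colnorm A m i"
  shows "\<forall>j<m. 0 \<le> cover_output A m n eps pick' ts j"
    "\<forall>i<n. 1 \<le> (\<Sum>j<m. A j i * cover_output A m n eps pick' ts j)"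
proof -
  have e: "0 < 1 - 3 * eps" using eps_le by simp
  show "\<forall>j<m. 0 \<le> cover_output A m n eps pick' ts j"
    unfolding cover_output_def using alg2_nonneg[OF assms ybar_nonneg] e by simp
  show "\<forall>i<n. 1 \<le> (\<Sum>j<m. A j i * cover_output A m n eps pick' ts j)"
    unfolding cover_output_def using alg2_covers[OF assms ybar_nonneg] e
    by (simp add: sum_divide_distrib[symmetric] le_divide_eq)
qed

lemma sum_ybar: "(\<Sum>j<m. ybar A m n eps ts j) = (\<Sum>k<T. \<Sum>j<m. p (X ts k) j) / real T"
  unfolding ybar_def by (simp add: sum_divide_distrib sum.swap[of _ "{..<m}"])

lemma sum_p_trajectory_le:
  assumes ts: "ts \<in> choice_lists w T" and "ts \<notin> large_gain" "ts \<notin> large_shift"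
  shows "(1 - eps) * (\<Sum>k<T. \<Sum>j<m. p (X ts k) j) \<le>
    real T * ((1 + 6 * eps) * K + eps) + \<alpha> * real w * (real T * K) + real w / \<alpha> * (1 + 200 * (eps + K))"
proof -
  have len: "length ts = T" using ts by (simp add: choice_lists_def)
  have "(1 - eps) * (\<Sum>k<T. \<Sum>j<m. p (X ts k) j) \<le>
      (1 + eps) * (\<Sum>k<T. total (X ts k)) + (\<Sum>k<T. full_shift (X ts k)) + (\<Sum>k<T. full_gain (X ts k)) + real T * eps"
    using sum_mono[of "{..<T}", OF sum_p_le[OF invariant_X]]
    by (simp add: sum_distrib_left sum.distrib)
  moreover have "(1 + eps) * (\<Sum>k<T. total (X ts k)) \<le> (1 + eps) * (real T * K)"
    using sum_mono[of "{..<T}", OF total_le_K[OF invariant_X]] eps_pos by (intro mult_left_mono) auto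
  moreover have "(\<Sum>k<T. full_gain (X ts k)) \<le> 200 * (real w / \<alpha>) * (eps + K)"
    using assms unfolding large_gain_def by auto
  moreover have "(\<Sum>k<T. full_shift (X ts k)) =
      path_sum shift_deviation ts + real w * (\<Sum>k<T. shift (X ts k) (ts ! k))"
    unfolding path_sum_def shift_deviation_def len by (simp add: sum_subtractf sum_distrib_left)
  moreover have "path_sum shift_deviation ts \<le> 5 * eps * real T * K"
    using assms unfolding large_shift_def by auto
  moreover have "real w * (\<Sum>k<T. shift (X ts k) (ts ! k)) \<le> real w * (1 / \<alpha> + \<alpha> * real T * K)"
    using sum_shift_le by (intro mult_left_mono) auto
  moreover have "(1 + eps) * (real T * K) + (5 * eps * real T * K + real w * (1 / \<alpha> + \<alpha> * real T * K))
      + 200 * (real w / \<alpha>) * (eps + K) + real T * eps =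
      real T * ((1 + 6 * eps) * K + eps) + \<alpha> * real w * (real T * K) + real w / \<alpha> * (1 + 200 * (eps + K))"
    using alpha_pos by (simp add: field_simps)
  ultimately show ?thesis by linarith
qed

lemma sum_ybar_le:
  assumes "ts \<in> choice_lists w T" "ts \<notin> large_gain" "ts \<notin> large_shift"
  shows "(1 - eps) * (\<Sum>j<m. ybar A m n eps ts j) \<le> (1 + 65 * eps) * OPT A m n"
proof -
  have K: "0 \<le> K" using K_ge_one by simp
  have "(1 - eps) * (\<Sum>j<m. ybar A m n eps ts j) =
      (1 - eps) * (\<Sum>k<T. \<Sum>j<m. p (X ts k) j) / real T"
    unfolding sum_ybar by simp
  also have "\<dots> \<le> (real T * ((1 + 6 * eps) * K + eps) + \<alpha> * real w * (real T * K)
      + real w / \<alpha> * (1 + 200 * (eps + K))) / real T"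
    using sum_p_trajectory_le[OF assms] T_pos by (intro divide_right_mono) auto
  also have "\<dots> = (1 + 6 * eps) * K + eps + \<alpha> * real w * K
      + real w / (\<alpha> * real T) * (1 + 200 * (eps + K))"
    using T_pos alpha_pos by (simp add: field_simps)
  also have "\<dots> \<le> (1 + 6 * eps) * K + eps + eps / 40 * K + eps / 4 * (1 + 200 * (eps + K))"
    using alpha_w_le w_div_alpha_T_le K eps_pos
    by (intro add_mono mult_right_mono order.refl) auto
  also have "\<dots> = (1 + 6 * eps + eps / 40) * ((1 + 2 * eps) * OPT A m n) + eps
      + eps / 4 * (1 + 200 * eps + 200 * ((1 + 2 * eps) * OPT A m n))"
    unfolding K_def by (simp add: field_simps)
  also have "\<dots> \<le> (1 + 65 * eps) * OPT A m n"
    by (rule covering_value_arith[OF eps_pos eps_le OPT_ge_one])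
  finally show ?thesis .
qed

lemma alg2_ybar_eq:
  assumes "\<forall>i<n. ts \<notin> undercovered i" "ts \<in> choice_lists w T"
  shows "alg2 A m n eps pick' (ybar A m n eps ts) = ybar A m n eps ts"
proof -
  have "{i. i < n \<and> lam A m eps (ybar A m n eps ts) i \<le> -2 * eps \<and> pick' i = j} = {}" for j
    using assms unfolding undercovered_def by auto
  then show ?thesis unfolding alg2_def by (simp only: sum.empty add_0_right)
qed

lemma cover_output_value_le:
  assumes "ts \<in> choice_lists w T" "ts \<notin> large_gain" "ts \<notin> large_shift"
    "\<forall>i<n. ts \<notin> undercovered i"
  shows "(\<Sum>j<m. cover_output A m n eps pick' ts j) \<le> (1 + 100 * eps) * OPT A m n"
proof -
  have e: "0 < 1 - eps" "0 < 1 - 3 * eps" using eps_le by auto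
  have "(\<Sum>j<m. cover_output A m n eps pick' ts j) = (\<Sum>j<m. ybar A m n eps ts j) / (1 - 3 * eps)"
    unfolding cover_output_def alg2_ybar_eq[OF assms(4,1)] by (simp add: sum_divide_distrib)
  also have "\<dots> \<le> (1 + 65 * eps) * OPT A m n / (1 - eps) / (1 - 3 * eps)"
    using sum_ybar_le[OF assms(1-3)] e by (intro divide_right_mono) (auto simp: le_divide_eq mult.commute)
  also have "\<dots> \<le> (1 + 100 * eps) * OPT A m n"
  proof -
    have "(1 + 65 * eps) * OPT A m n \<le> ((1 - eps) * (1 - 3 * eps) * (1 + 100 * eps)) * OPT A m n"
      using rescaling_arith[OF eps_pos eps_le] OPT_ge_one by (intro mult_right_mono) auto
    then show ?thesis using e by (simp add: divide_le_eq mult_ac)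
  qed
  finally show ?thesis .
qed

end

context packing_instance
begin

lemma T_le: "real T \<le> 400 * (ln (1 / eps))\<^sup>2 * L * ln (2 * real n) / eps\<^sup>2"
proof -
  define \<Lambda> where "\<Lambda> = ln (1 / eps)"
  define Q where "Q = \<Lambda>\<^sup>2 * L * ln (2 * real n) / eps\<^sup>2"
  define a where "a = 6 * real w * ln (2 * real n) / (\<alpha> * eps)"
  define b where "b = 2 * real w ^ 2 * ln (real n / eps) / eps ^ 2"
  have \<Lambda>: "3 \<le> \<Lambda>" unfolding \<Lambda>_def by (rule ln_inv_eps_ge_3)
  have w: "real w \<le> 2 * \<Lambda>" unfolding \<Lambda>_def by (rule w_le_two_ln_inv_eps)
  have e2: "0 < eps\<^sup>2" using eps_pos by simp
  have "0 \<le> a" unfolding a_def using alpha_pos eps_pos ln_two_n_ge by simp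
  then have "real T \<le> max a b + 1"
    unfolding Tpar_def a_def[symmetric] b_def[symmetric] by linarith
  moreover have "a \<le> 320 * Q"
  proof -
    have "real w \<le> 2/3 * \<Lambda>\<^sup>2" unfolding \<Lambda>_def by (rule w_le_two_thirds_ln_inv_eps_sq)
    then have "a \<le> 480 * (2/3 * \<Lambda>\<^sup>2) * L * ln (2 * real n) / eps\<^sup>2"
      unfolding a_def alpha_eq using eps_pos L_ge_3 ln_two_n_ge
      by (simp add: field_simps power2_eq_square mult_right_mono)
    then show ?thesis unfolding Q_def by simp
  qed
  moreover have "b \<le> 12 * Q"
  proof -
    have "real w ^ 2 * ln (real n / eps) \<le> (2 * \<Lambda>)\<^sup>2 * L"
      using w ln_n_div_eps_le_L ln_inv_eps_ge_3 ln_inv_eps_le_ln_n_div_eps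
      by (intro mult_mono power_mono) auto
    also have "\<dots> \<le> 6 * (\<Lambda>\<^sup>2 * L * ln (2 * real n))"
      using ln_two_n_ge L_ge_3 mult_left_mono[of "2/3" "ln (2 * real n)" "6 * (\<Lambda>\<^sup>2 * L)"]
      by (simp add: power_mult_distrib)
    finally have "2 * (real w ^ 2 * ln (real n / eps)) \<le> 12 * (\<Lambda>\<^sup>2 * L * ln (2 * real n))"
      by linarith
    from divide_right_mono[OF this, of "eps\<^sup>2"] show ?thesis
      unfolding b_def Q_def using e2 by (simp add: mult.assoc)
  qed
  moreover have "1 \<le> Q"
  proof -
    have "3 * 3 * 3 * (2/3) \<le> \<Lambda>\<^sup>2 * L * ln (2 * real n)"
      using \<Lambda> L_ge_3 ln_two_n_ge unfolding power2_eq_square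
      by (intro mult_mono) (auto intro: mult_mono)
    moreover have "eps\<^sup>2 \<le> 1" using eps_pos eps_le by (simp add: power_le_one)
    ultimately show ?thesis unfolding Q_def using e2 by (simp add: le_divide_eq)
  qed
  ultimately have "real T \<le> 400 * Q" by linarith
  then show ?thesis unfolding Q_def \<Lambda>_def by simp
qed

lemma prob_cover_output_good:
  assumes "\<And>ts i. i < n \<Longrightarrow> pick ts i < m \<and> A (pick ts i) i = colnorm A m i"
  shows "9/10 \<le> measure_pmf.prob (pmf_of_set (choice_seqs m n eps))
    {ts. (\<Sum>j<m. cover_output A m n eps (pick ts) ts j) \<le> (1 + 100 * eps) * OPT A m n}"
proof -
  define G where "G = {ts. (\<Sum>j<m. cover_output A m n eps (pick ts) ts j) \<le> (1 + 100 * eps) * OPT A m n}"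
  define B where "B = large_gain \<union> large_shift \<union> (\<Union>i<n. undercovered i)"
  define S where "S = choice_lists w T"
  have S: "choice_seqs m n eps = S" unfolding S_def choice_seqs_def choice_lists_def by auto
  have card_S: "card S = w ^ T" and fin: "finite S"
    unfolding S_def by (simp_all add: card_choice_lists finite_choice_lists)
  have S_ne: "S \<noteq> {}" using card_S w_ge_5 by auto
  have "S - G \<subseteq> B"
    unfolding S_def G_def B_def using cover_output_value_le assms by blast
  moreover have "B \<subseteq> S" unfolding B_def S_def large_gain_def large_shift_def undercovered_def by auto
  ultimately have "card (S - G) \<le> card large_gain + card large_shift + card (\<Union>i<n. undercovered i)"
    unfolding B_def using fin by (meson card_Un_le card_mono finite_subset add_le_mono order.trans order.refl)
  then have "real (card (S - G)) \<le> real (w ^ T) / 10"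
    using card_large_gain card_large_shift card_undercovered_some by linarith
  moreover have "real (card S) = real (card (S \<inter> G)) + real (card (S - G))"
    using fin card_Int_Diff[of S G] by simp
  ultimately have "9/10 * real (card S) \<le> real (card (S \<inter> G))"
    using card_S by simp
  moreover have "0 < card S" using card_S w_ge_5 by simp
  ultimately have "9/10 \<le> real (card (S \<inter> G)) / real (card S)"
    by (simp add: le_divide_eq)
  also have "\<dots> = measure_pmf.prob (pmf_of_set S) G"
    by (rule measure_pmf_of_set[OF S_ne fin, symmetric])
  finally show ?thesis unfolding S G_def .
qed

lemma covering_guarantees:
  assumes pick: "\<forall>ts i. i < n \<longrightarrow> pick ts i < m \<and> A (pick ts i) i = colnorm A m i"
  shows "(\<forall>ts\<in>choice_seqs m n eps.
        (\<forall>j<m. 0 \<le> cover_output A m n eps (pick ts) ts j) \<and>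
        (\<forall>i<n. (\<Sum>j<m. A j i * cover_output A m n eps (pick ts) ts j) \<ge> 1))
    \<and> measure_pmf.prob (pmf_of_set (choice_seqs m n eps))
        {ts. (\<Sum>j<m. cover_output A m n eps (pick ts) ts j) \<le> (1 + 100 * eps) * OPT A m n} \<ge> 9/10
    \<and> real T \<le> 400 * (ln (1/eps))^2 * ln (real n * real m / eps) * ln (2 * real n) / eps^2"
  using cover_output_feasible prob_cover_output_good T_le pick unfolding L_def by blast

end

lemma packing_instanceI:
  assumes "0 < n" "\<forall>j<m. \<forall>i<n. 0 \<le> A j i" "\<forall>i<n. \<exists>j<m. A j i \<noteq> 0"
    "Min (colnorm A m ` {..<n}) = 1" "0 < eps" "eps \<le> 1/30"
  shows "packing_instance A m n eps"
  using assms by unfold_locales auto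

theorem theorem2:
  shows "\<exists>C>0. \<exists>D>0. \<forall>(m::nat) (n::nat) (A::nat \<Rightarrow> nat \<Rightarrow> real) (eps::real)
            (pick::nat list \<Rightarrow> nat \<Rightarrow> nat).
    0 < n \<longrightarrow>
    (\<forall>j<m. \<forall>i<n. 0 \<le> A j i) \<longrightarrow>
    (\<forall>i<n. \<exists>j<m. A j i \<noteq> 0) \<longrightarrow>
    Min (colnorm A m ` {..<n}) = 1 \<longrightarrow>
    0 < eps \<longrightarrow> eps \<le> 1/30 \<longrightarrow>
    (\<forall>ts i. i < n \<longrightarrow> pick ts i < m \<and> A (pick ts i) i = colnorm A m i) \<longrightarrow>
    (\<forall>ts\<in>choice_seqs m n eps.
        (\<forall>j<m. 0 \<le> cover_output A m n eps (pick ts) ts j) \<and>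
        (\<forall>i<n. (\<Sum>j<m. A j i * cover_output A m n eps (pick ts) ts j) \<ge> 1))
    \<and> measure_pmf.prob (pmf_of_set (choice_seqs m n eps))
        {ts. (\<Sum>j<m. cover_output A m n eps (pick ts) ts j) \<le> (1 + C * eps) * OPT A m n} \<ge> 9/10
    \<and> real (Tpar m n eps) \<le>
        D * (ln (1/eps))^2 * ln (real n * real m / eps) * ln (2 * real n) / eps^2"
  by (intro exI[of _ "100::real"] exI[of _ "400::real"] conjI[OF zero_less_numeral] allI impI)
    (rule packing_instance.covering_guarantees[OF packing_instanceI]; assumption)

end
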